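(* Let $g,h:[0,1]\to\mathbb{R}$ be standardized, piecewise continuous and strictly monotonic functions. Let $U_0\sim\mathcal{U}(0,1)$, let $F_g$ and $F_h$ denote the distribution functions of $g(U_0)$ and $h(U_0)$, and set $T_g=F_g\circ g$, $T_h=F_h\circ h$. Let $X,Y$ be continuous random variables with distribution functions $F_X,F_Y$, and put $U=F_X(X)$, $V=F_Y(Y)$. Then: (a) The upper bound (maximum over all joint distributions) of $\rho_{\{g,h\}}(X,Y)$ is $$\rho_{\{g,h\}\max}=\int_0^1 F_g^{-1}(u)F_h^{-1}(u)\,\mathrm{d}u,$$ and it is attained when $T_g(U)=T_h(V)$ almost surely. (b) The lower bound (minimum over all joint distributions) of $\rho_{\{g,h\}}(X,Y)$ is $$\rho_{\{g,h\}\min}=\int_0^1 F_g^{-1}(u)F_h^{-1}(1-u)\,\mathrm{d}u,$$ and it is attained when $T_g(U)=1-T_h(V)$ almost surely. (c) The upper bound equals $1$ when $F_g=F_h$, and the lower bound equals $-1$ when $F_h^{-1}(1-u)=-F_g^{-1}(u)$ for all $u\in[0,1]$.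
   Context: $\rho$ denotes Pearson correlation. For continuous random variables $X,Y$ with distribution functions $F_X,F_Y$ and $g,h\in\mathcal{L}^2([0,1])$, the generalized Spearman correlation is $\rho_{\{g,h\}}(X,Y)=\rho\big(g(F_X(X)),h(F_Y(Y))\big)$. A function $\psi\in\mathcal{L}^2([0,1])$ is standardized if $\int_0^1\psi(u)\,\mathrm{d}u=0$ and $\int_0^1\psi^2(u)\,\mathrm{d}u=1$. It is piecewise continuous and strictly monotonic if there is a finite partition $0=u_0<u_1<\dots<u_M=1$ such that for each $m$ the restriction of $\psi$ to $(u_{m-1},u_m)$ is continuous and strictly monotonic (partitions for $g$ and $h$ may differ). For a distribution function $F$, $F^{-1}(u)=\inf\{x\in\mathbb{R}:F(x)\ge u\}$ is the generalized inverse. *)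

theory Defs
  imports "HOL-Probability.Probability"
begin

definition standardized :: "(real \<Rightarrow> real) \<Rightarrow> bool" where
  "standardized \<psi> \<longleftrightarrow>
     set_borel_measurable lborel {0..1} \<psi> \<and>
     set_integrable lborel {0..1} (\<lambda>u. (\<psi> u)\<^sup>2) \<and>
     (LINT u:{0..1}|lborel. \<psi> u) = 0 \<and>
     (LINT u:{0..1}|lborel. (\<psi> u)\<^sup>2) = 1"

definition pw_cont_strict_mono :: "(real \<Rightarrow> real) \<Rightarrow> bool" where
  "pw_cont_strict_mono \<psi> \<longleftrightarrow>
     (\<exists>(K::nat) (u::nat \<Rightarrow> real). u 0 = 0 \<and> u K = 1 \<and>
        (\<forall>m<K. u m < u (Suc m)) \<and>
        (\<forall>m<K. continuous_on {u m<..<u (Suc m)} \<psi> \<and>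
                (strict_mono_on {u m<..<u (Suc m)} \<psi> \<or>
                 strict_antimono_on {u m<..<u (Suc m)} \<psi>)))"

definition unif_dist_fn :: "(real \<Rightarrow> real) \<Rightarrow> real \<Rightarrow> real" where
  "unif_dist_fn \<psi> x = measure lborel {u \<in> {0..1}. \<psi> u \<le> x}"

definition gen_inv :: "(real \<Rightarrow> real) \<Rightarrow> real \<Rightarrow> real" where
  "gen_inv F u = Inf {x. u \<le> F x}"

definition dist_fn :: "'a measure \<Rightarrow> ('a \<Rightarrow> real) \<Rightarrow> real \<Rightarrow> real" where
  "dist_fn M X = cdf (distr M borel X)"

definition continuous_rv :: "'a measure \<Rightarrow> ('a \<Rightarrow> real) \<Rightarrow> bool" where
  "continuous_rv M X \<longleftrightarrow> X \<in> borel_measurable M \<and> (\<forall>x. isCont (dist_fn M X) x)"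

definition pearson :: "'a measure \<Rightarrow> ('a \<Rightarrow> real) \<Rightarrow> ('a \<Rightarrow> real) \<Rightarrow> real" where
  "pearson M A B =
     (let mA = (\<integral>w. A w \<partial>M); mB = (\<integral>w. B w \<partial>M) in
       (\<integral>w. (A w - mA) * (B w - mB) \<partial>M) /
       sqrt ((\<integral>w. (A w - mA)\<^sup>2 \<partial>M) * (\<integral>w. (B w - mB)\<^sup>2 \<partial>M)))"

definition gen_spearman ::
  "(real \<Rightarrow> real) \<Rightarrow> (real \<Rightarrow> real) \<Rightarrow> 'a measure \<Rightarrow> ('a \<Rightarrow> real) \<Rightarrow> ('a \<Rightarrow> real) \<Rightarrow> real" where
  "gen_spearman g h M X Y =
     pearson M (\<lambda>w. g (dist_fn M X (X w))) (\<lambda>w. h (dist_fn M Y (Y w)))"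

end

theory Submission
  imports Defs
begin

text \<open>
  For continuous \<open>X\<close>, \<open>F\<^sub>X(X)\<close> is uniform, so \<open>A = g(F\<^sub>X(X))\<close> has the law
  of \<open>g(U\<^sub>0)\<close>. As \<open>g\<close> is piecewise strictly monotone, \<open>F\<^sub>g\<close> is continuous, hence
  \<open>W = F\<^sub>g(A)\<close> is again uniform and \<open>A = F\<^sub>g\<^sup>-\<^sup>1(W)\<close> almost surely; likewise
  \<open>B = h(F\<^sub>Y(Y)) = F\<^sub>h\<^sup>-\<^sup>1(W')\<close>. Both are standardized, so
  \<open>\<rho>\<^sub>g\<^sub>,\<^sub>h(X, Y) = E[F\<^sub>g\<^sup>-\<^sup>1(W) F\<^sub>h\<^sup>-\<^sup>1(W')]\<close>, and the rearrangement inequality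
  for the monotone quantile functions bounds this by its values for \<open>W' = W\<close> and
  \<open>W' = 1 - W\<close>, which are the two integrals. The bounds are attained: \<open>T\<^sub>h\<close> preserves
  the uniform distribution and is invertible on each piece of \<open>h\<close>, so for uniform \<open>U\<close>
  a uniform \<open>V\<close> with \<open>T\<^sub>h(V) = T\<^sub>g(U)\<close> is obtained by choosing a piece with the
  Radon-Nikodym density of its image under \<open>T\<^sub>h\<close>.
\<close>

section \<open>The uniform distribution on the unit interval\<close>

definition uniform01 :: "real measure" where
  "uniform01 = uniform_measure lborel {0<..<1}"

lemma sets_uniform01 [simp, measurable_cong]: "sets uniform01 = sets borel"
  by (simp add: uniform01_def)

lemma space_uniform01 [simp]: "space uniform01 = UNIV"
  by (simp add: uniform01_def)

lemma emeasure_uniform01: "A \<in> sets borel \<Longrightarrow> emeasure uniform01 A = emeasure lborel (A \<inter> {0<..<1})"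
  by (simp add: uniform01_def Int_commute divide_ennreal_def)

lemma uniform01_eq_density: "uniform01 = density lborel (\<lambda>x. ennreal (indicator {0<..<1} x))"
  by (simp add: uniform01_def uniform_measure_def divide_ennreal_def ennreal_indicator)

lemma prob_space_uniform01: "prob_space uniform01"
  unfolding uniform01_def by (rule prob_space_uniform_measure) auto

interpretation uniform01: prob_space uniform01
  by (rule prob_space_uniform01)

lemma AE_uniform01: "AE x in uniform01. 0 < x \<and> x < 1"
  unfolding uniform01_eq_density by (subst AE_density) (auto simp: indicator_def)

lemma AE_lborel_ne_0_1: "AE u in lborel. u \<noteq> 0 \<and> u \<noteq> 1"
  using AE_lborel_singleton[of 0] AE_lborel_singleton[of 1] by eventually_elim auto

lemma integral_uniform01:
  fixes f :: "real \<Rightarrow> real"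
  assumes [measurable]: "f \<in> borel_measurable borel"
  shows "integral\<^sup>L uniform01 f = (LINT x:{0..1}|lborel. f x)"
proof -
  have "integral\<^sup>L uniform01 f = (\<integral>x. indicator {0<..<1::real} x *\<^sub>R f x \<partial>lborel)"
    unfolding uniform01_eq_density by (rule integral_density) (auto simp: indicator_def)
  also have "\<dots> = (\<integral>x. indicator {0..1::real} x *\<^sub>R f x \<partial>lborel)"
    using AE_lborel_ne_0_1 by (intro integral_cong_AE) (auto elim!: eventually_mono simp: indicator_def)
  finally show ?thesis by (simp add: set_lebesgue_integral_def)
qed

lemma integrable_uniform01_iff:
  fixes f :: "real \<Rightarrow> real"
  assumes [measurable]: "f \<in> borel_measurable borel"
  shows "integrable uniform01 f \<longleftrightarrow> set_integrable lborel {0..1} f"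
proof -
  have "integrable uniform01 f \<longleftrightarrow> integrable lborel (\<lambda>x. indicator {0<..<1::real} x *\<^sub>R f x)"
    unfolding uniform01_eq_density by (rule integrable_density) (auto simp: indicator_def)
  also have "\<dots> \<longleftrightarrow> integrable lborel (\<lambda>x. indicator {0..1::real} x *\<^sub>R f x)"
    using AE_lborel_ne_0_1 by (intro integrable_cong_AE) (auto elim!: eventually_mono simp: indicator_def)
  finally show ?thesis by (simp add: set_integrable_def)
qed

lemma set_integral_unit_eq_integral_uniform01:
  fixes f f' :: "real \<Rightarrow> real"
  assumes [measurable]: "f' \<in> borel_measurable borel" and eq: "\<And>u. 0 < u \<Longrightarrow> u < 1 \<Longrightarrow> f u = f' u"
  shows "(LINT u:{0..1}|lborel. f u) = integral\<^sup>L uniform01 f'"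
proof -
  define f'' where "f'' u = (if u = 0 then f 0 else if u = 1 then f 1 else f' u)" for u
  have [measurable]: "f'' \<in> borel_measurable borel"
    unfolding f''_def by measurable
  have "(LINT u:{0..1}|lborel. f u) = (LINT u:{0..1}|lborel. f'' u)"
    by (rule set_lebesgue_integral_cong) (auto simp: f''_def eq)
  also have "\<dots> = integral\<^sup>L uniform01 f''"
    by (rule integral_uniform01[symmetric]) measurable
  also have "\<dots> = integral\<^sup>L uniform01 f'"
  proof (rule integral_cong_AE)
    show "AE u in uniform01. f'' u = f' u"
      using AE_uniform01 by eventually_elim (simp add: f''_def)
  qed measurable
  finally show ?thesis .
qed

lemma real_distribution_uniform01: "real_distribution uniform01"
  by (auto simp: real_distribution_def real_distribution_axioms_def prob_space_uniform01)

lemma cdf_uniform01: "cdf uniform01 x = max 0 (min 1 x)"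
proof -
  have "cdf uniform01 x = measure lborel ({..x} \<inter> {0<..<1})"
    by (simp add: cdf_def measure_def emeasure_uniform01)
  also have "{..x} \<inter> {0<..<1} = {0<..<max 0 (min 1 x)} \<union> ({x} \<inter> {0<..<1})"
    by (auto simp: max_def min_def)
  also have "measure lborel \<dots> = max 0 (min 1 x)"
    by (subst measure_Un_null_set) (auto intro: finite_imp_null_set_lborel)
  finally show ?thesis .
qed

lemma distr_eq_uniform01_iff_cdf:
  assumes "prob_space M" and [measurable]: "W \<in> borel_measurable M"
  shows "distr M borel W = uniform01 \<longleftrightarrow> (\<forall>x. measure M {\<omega>\<in>space M. W \<omega> \<le> x} = max 0 (min 1 x))"
proof -
  interpret prob_space M by fact
  have "distr M borel W = uniform01 \<longleftrightarrow> cdf (distr M borel W) = cdf uniform01"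
    using cdf_unique[OF _ real_distribution_uniform01, of "distr M borel W"]
    by (auto simp: real_distribution_distr)
  also have "\<dots> \<longleftrightarrow> (\<forall>x. measure M {\<omega>\<in>space M. W \<omega> \<le> x} = max 0 (min 1 x))"
    by (simp add: fun_eq_iff cdf_uniform01) (simp add: cdf_def measure_distr vimage_def Int_def conj_commute)
  finally show ?thesis .
qed

lemma distr_reflect_uniform01: "distr uniform01 borel (\<lambda>x. 1 - x) = uniform01"
proof (subst distr_eq_uniform01_iff_cdf)
  show "\<forall>t. measure uniform01 {x \<in> space uniform01. 1 - x \<le> t} = max 0 (min 1 t)"
  proof
    fix t :: real
    define c where "c = max 0 (min 1 t)"
    have "measure uniform01 {x \<in> space uniform01. 1 - x \<le> t} = measure lborel ({x. 1 - x \<le> t} \<inter> {0<..<1})"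
      by (simp add: measure_def emeasure_uniform01)
    also have "\<dots> = measure lborel {1 - c<..<1}"
    proof (rule measure_eq_AE)
      show "AE x in lborel. x \<in> {x. 1 - x \<le> t} \<inter> {0<..<1} \<longleftrightarrow> x \<in> {1 - c<..<1}"
        using AE_lborel_singleton[of "1 - t"] by eventually_elim (auto simp: c_def)
    qed auto
    also have "\<dots> = c"
      by (simp add: c_def)
    finally show "measure uniform01 {x \<in> space uniform01. 1 - x \<le> t} = max 0 (min 1 t)"
      by (simp add: c_def)
  qed
qed (auto simp: prob_space_uniform01)

lemma distr_one_minus_uniform01_rv:
  assumes [measurable]: "W \<in> borel_measurable M" and distr_W: "distr M borel W = uniform01"
  shows "distr M borel (\<lambda>\<omega>. 1 - W \<omega>) = uniform01"
proof -
  have "distr M borel (\<lambda>\<omega>. 1 - W \<omega>) = distr (distr M borel W) borel (\<lambda>x. 1 - x)"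
    by (subst distr_distr) (auto simp: comp_def)
  then show ?thesis
    by (simp add: distr_W distr_reflect_uniform01)
qed

lemma dist_fn_uniform01_rv:
  assumes "distr M borel Z = uniform01"
  shows "dist_fn M Z = (\<lambda>x. max 0 (min 1 x))"
  by (rule ext) (simp add: dist_fn_def assms cdf_uniform01)

lemma continuous_rv_uniform01_rv:
  assumes "Z \<in> borel_measurable M" and "distr M borel Z = uniform01"
  shows "continuous_rv M Z"
  using assms by (simp add: continuous_rv_def dist_fn_uniform01_rv continuous_intros)

lemma AE_uniform01_rv:
  assumes [measurable]: "W \<in> borel_measurable M" and distr_W: "distr M borel W = uniform01"
  shows "AE \<omega> in M. 0 < W \<omega> \<and> W \<omega> < 1"
proof -
  have "AE x in distr M borel W. 0 < x \<and> x < 1"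
    unfolding distr_W by (rule AE_uniform01)
  then show ?thesis
    by (subst (asm) AE_distr_iff) auto
qed

lemma nn_integral_uniform01_rv:
  assumes [measurable]: "W \<in> borel_measurable M" and distr_W: "distr M borel W = uniform01"
    and [measurable]: "h \<in> borel_measurable borel"
  shows "(\<integral>\<^sup>+\<omega>. h (W \<omega>) \<partial>M) = (\<integral>\<^sup>+w. h w \<partial>uniform01)"
  by (simp add: distr_W[symmetric] nn_integral_distr)

lemma (in prob_space) dist_fn_bounds:
  assumes "X \<in> borel_measurable M"
  shows "dist_fn M X x \<in> {0..1}"
proof -
  interpret L: real_distribution "distr M borel X"
    using assms by simp
  show ?thesis
    by (simp add: dist_fn_def L.cdf_nonneg L.cdf_bounded_prob)
qed

lemma (in prob_space) measurable_dist_fn [measurable]: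
  assumes "X \<in> borel_measurable M"
  shows "dist_fn M X \<in> borel_measurable borel"
proof -
  interpret L: cdf_distribution "distr M borel X"
    using assms by (simp add: cdf_distribution_def)
  show ?thesis
    by (simp add: dist_fn_def)
qed

lemma (in real_distribution) measure_cdf_less:
  assumes cont_cdf: "\<And>x. isCont (cdf M) x" and w: "0 < w" "w < 1"
  shows "measure M {x. cdf M x < w} = w"
proof -
  interpret cdf_distribution M ..
  have below: "cdf M x < w \<longleftrightarrow> x < I w" for x
    using pseudoinverse[OF w, of x] by linarith
  have lim: "(cdf M \<longlongrightarrow> cdf M (I w)) (at_left (I w))"
    using cont_cdf[of "I w"] by (simp add: isCont_def filterlim_at_split)
  have "measure M {x. cdf M x < w} = measure M {..<I w}"
    using below by (simp add: lessThan_def)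
  also have "\<dots> = cdf M (I w)"
    using tendsto_unique[OF _ cdf_at_left lim] by simp
  also have "\<dots> = w"
  proof (rule antisym)
    have "eventually (\<lambda>x. x < I w) (at_left (I w))"
      using eventually_at_left_real[of "I w - 1" "I w"] by (auto elim: eventually_mono)
    then have "eventually (\<lambda>x. cdf M x \<le> w) (at_left (I w))"
      by eventually_elim (simp add: below less_imp_le)
    then show "cdf M (I w) \<le> w"
      by (rule tendsto_upperbound[OF lim]) simp
    show "w \<le> cdf M (I w)"
      using below[of "I w"] by simp
  qed
  finally show ?thesis .
qed

lemma (in real_distribution) distr_cdf_eq_uniform01:
  assumes cont_cdf: "\<And>x. isCont (cdf M) x"
  shows "distr M borel (cdf M) = uniform01"
proof -
  interpret cdf_distribution M ..
  have "measure M {y. cdf M y \<le> x} = max 0 (min 1 x)" for x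
  proof (cases "x < 0 \<or> 1 \<le> x")
    case True
    then have "{y. cdf M y \<le> x} = (if x < 0 then {} else UNIV)"
      by (auto simp: not_le intro: less_le_trans[OF _ cdf_nonneg] order_trans[OF cdf_bounded_prob])
    then show ?thesis
      using True prob_space by auto
  next
    case False
    have "measure M {y. cdf M y \<le> x} \<le> x"
    proof (rule dense_ge_bounded)
      show "x < 1" using False by simp
    next
      fix w assume "x < w" "w < 1"
      then have "measure M {y. cdf M y \<le> x} \<le> measure M {y. cdf M y < w}"
        by (intro finite_measure_mono) auto
      also have "\<dots> = w"
        using measure_cdf_less[OF cont_cdf] \<open>x < w\<close> \<open>w < 1\<close> False by simp
      finally show "measure M {y. cdf M y \<le> x} \<le> w" .
    qed
    moreover have "x \<le> measure M {y. cdf M y \<le> x}"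
    proof (cases "x = 0")
      case False': False
      then have "x = measure M {y. cdf M y < x}"
        using measure_cdf_less[OF cont_cdf, of x] False by simp
      also have "\<dots> \<le> measure M {y. cdf M y \<le> x}"
        by (intro finite_measure_mono) auto
      finally show ?thesis .
    qed simp
    ultimately show ?thesis
      using False by simp
  qed
  then show ?thesis
    by (subst distr_eq_uniform01_iff_cdf) (auto simp: prob_space_axioms)
qed

lemma distr_dist_fn_eq_uniform01:
  assumes "prob_space M" and "continuous_rv M X"
  shows "distr M borel (\<lambda>\<omega>. dist_fn M X (X \<omega>)) = uniform01"
proof -
  interpret prob_space M by fact
  have [measurable]: "X \<in> borel_measurable M"
    using assms(2) by (simp add: continuous_rv_def)
  interpret L: cdf_distribution "distr M borel X"
    by (simp add: cdf_distribution_def)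
  have "distr M borel (\<lambda>\<omega>. dist_fn M X (X \<omega>)) = distr (distr M borel X) borel (cdf (distr M borel X))"
    by (subst distr_distr) (auto simp: dist_fn_def comp_def)
  also have "\<dots> = uniform01"
    using assms(2) by (intro L.distr_cdf_eq_uniform01) (simp add: continuous_rv_def dist_fn_def)
  finally show ?thesis .
qed

section \<open>Quantile functions\<close>

text \<open>\<^const>\<open>gen_inv\<close> takes junk values outside \<open>(0, 1)\<close> (infima of unbounded or empty
  sets), so the quantile function is cut off there to make it measurable on all of \<open>\<real>\<close>.\<close>
definition quantile :: "(real \<Rightarrow> real) \<Rightarrow> real \<Rightarrow> real" where
  "quantile F w = (if w \<in> {0<..<1} then gen_inv F w else 0)"

context real_distribution
begin

interpretation cdf_distribution M ..

lemma quantile_le_iff: "0 < w \<Longrightarrow> w < 1 \<Longrightarrow> quantile (cdf M) w \<le> x \<longleftrightarrow> w \<le> cdf M x"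
  using pseudoinverse[of w x] by (simp add: quantile_def gen_inv_def)

lemma mono_on_quantile: "mono_on {0<..<1} (quantile (cdf M))"
  using mono_I by (auto simp: mono_on_def quantile_def gen_inv_def)

lemma measurable_quantile [measurable]: "quantile (cdf M) \<in> borel_measurable borel"
proof -
  have "gen_inv (cdf M) \<in> borel_measurable (restrict_space borel {0<..<1})"
    using measurable_CI by (simp add: gen_inv_def[abs_def])
  then show ?thesis
    using measurable_restrict_space_iff[of "{0<..<1}" borel 0 borel "gen_inv (cdf M)"]
    by (simp add: quantile_def[abs_def])
qed

lemma distr_quantile: "distr uniform01 borel (quantile (cdf M)) = M"
proof (rule cdf_unique)
  show "real_distribution (distr uniform01 borel (quantile (cdf M)))"
    by simp
  show "cdf (distr uniform01 borel (quantile (cdf M))) = cdf M"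
  proof
    fix x
    have "cdf (distr uniform01 borel (quantile (cdf M))) x = measure uniform01 {w. quantile (cdf M) w \<le> x}"
      by (simp add: cdf_def[of "distr uniform01 borel (quantile (cdf M))"] measure_distr vimage_def)
    also have "\<dots> = measure uniform01 {..cdf M x}"
    proof (rule measure_eq_AE)
      show "AE w in uniform01. w \<in> {w. quantile (cdf M) w \<le> x} \<longleftrightarrow> w \<in> {..cdf M x}"
        using AE_uniform01 by eventually_elim (simp add: quantile_le_iff)
    qed auto
    also have "\<dots> = cdf M x"
      using cdf_uniform01[of "cdf M x"] by (simp add: cdf_def cdf_nonneg cdf_bounded_prob)
    finally show "cdf (distr uniform01 borel (quantile (cdf M))) x = cdf M x" .
  qed
qed (rule real_distribution_axioms)

end

text \<open>\<open>arctan Y - arctan X\<close> is bounded, nonnegative almost everywhere and of mean zero.\<close>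
lemma AE_eq_if_AE_le_and_same_distr:
  fixes X Y :: "'a \<Rightarrow> real"
  assumes "prob_space M" and [measurable]: "X \<in> borel_measurable M" "Y \<in> borel_measurable M"
    and same: "distr M borel X = distr M borel Y" and le: "AE \<omega> in M. X \<omega> \<le> Y \<omega>"
  shows "AE \<omega> in M. X \<omega> = Y \<omega>"
proof -
  interpret prob_space M by fact
  have "\<bar>arctan x\<bar> \<le> pi / 2" for x
    using arctan_ubound[of x] arctan_lbound[of x] by linarith
  then have integrable: "integrable M (\<lambda>\<omega>. arctan (Z \<omega>))" if [measurable]: "Z \<in> borel_measurable M" for Z
    by (intro integrable_const_bound[where B = "pi / 2"]) auto
  have "(\<integral>\<omega>. arctan (X \<omega>) \<partial>M) = (\<integral>\<omega>. arctan (Y \<omega>) \<partial>M)"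
    using integral_distr[of X M borel arctan] integral_distr[of Y M borel arctan] same by simp
  then have "(\<integral>\<omega>. arctan (Y \<omega>) - arctan (X \<omega>) \<partial>M) = 0"
    by (simp add: integrable)
  moreover have "AE \<omega> in M. 0 \<le> arctan (Y \<omega>) - arctan (X \<omega>)"
    using le by eventually_elim (simp add: arctan_monotone')
  ultimately have "AE \<omega> in M. arctan (Y \<omega>) - arctan (X \<omega>) = 0"
    by (subst (asm) integral_nonneg_eq_0_iff_AE) (auto simp: integrable)
  then show ?thesis
    by eventually_elim (simp add: arctan_eq_iff)
qed

lemma AE_quantile_dist_fn_eq:
  assumes "prob_space M" and A: "continuous_rv M A"
  shows "AE \<omega> in M. quantile (dist_fn M A) (dist_fn M A (A \<omega>)) = A \<omega>"
proof -
  interpret prob_space M by fact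
  have [measurable]: "A \<in> borel_measurable M"
    using A by (simp add: continuous_rv_def)
  interpret L: cdf_distribution "distr M borel A"
    by (simp add: cdf_distribution_def)
  have F: "dist_fn M A = cdf (distr M borel A)"
    by (simp add: dist_fn_def)
  have uniform: "distr M borel (\<lambda>\<omega>. dist_fn M A (A \<omega>)) = uniform01"
    by (rule distr_dist_fn_eq_uniform01[OF prob_space_axioms A])
  have "AE \<omega> in M. 0 < dist_fn M A (A \<omega>) \<and> dist_fn M A (A \<omega>) < 1"
    by (rule AE_uniform01_rv[OF _ uniform]) measurable
  then have "AE \<omega> in M. quantile (dist_fn M A) (dist_fn M A (A \<omega>)) \<le> A \<omega>"
    by eventually_elim (simp add: F L.quantile_le_iff)
  moreover have "distr M borel (\<lambda>\<omega>. quantile (dist_fn M A) (dist_fn M A (A \<omega>)))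
      = distr (distr M borel (\<lambda>\<omega>. dist_fn M A (A \<omega>))) borel (quantile (dist_fn M A))"
    by (subst distr_distr) (auto simp: F comp_def)
  then have "distr M borel (\<lambda>\<omega>. quantile (dist_fn M A) (dist_fn M A (A \<omega>))) = distr M borel A"
    using L.distr_quantile uniform by (simp add: F)
  ultimately show ?thesis
    by (intro AE_eq_if_AE_le_and_same_distr) (auto simp: F prob_space_axioms)
qed

section \<open>Piecewise strictly monotone functions\<close>

lemma partition_cover:
  fixes v :: "nat \<Rightarrow> real"
  assumes "x \<in> {v 0..v K}"
  shows "x \<in> v ` {..K} \<union> (\<Union>m<K. {v m<..<v (Suc m)})"
  using assms
proof (induction K)
  case (Suc K)
  then show ?case
    by (cases "x \<le> v K") (auto simp: atMost_Suc lessThan_Suc)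
qed simp

locale unit_partition =
  fixes K :: nat and v :: "nat \<Rightarrow> real"
  assumes v_0: "v 0 = 0" and v_K: "v K = 1" and v_less: "\<And>m. m < K \<Longrightarrow> v m < v (Suc m)"
begin

lemma v_mono:
  assumes "m \<le> n" and "n \<le> K"
  shows "v m \<le> v n"
proof (rule lift_Suc_mono_le_ivl[of "{..<K}" v, OF _ assms(1)])
  show "v k \<le> v (Suc k)" if "k \<in> {..<K}" for k
    using v_less[of k] that by simp
  show "{m..<n} \<subseteq> {..<K}"
    using assms(2) by auto
qed

lemma piece_subset_unit: "m < K \<Longrightarrow> {v m<..<v (Suc m)} \<subseteq> {0..1}"
  using v_mono[of 0 m] v_mono[of "Suc m" K] v_0 v_K by auto

lemma unit_subset_pieces: "{0..1} \<subseteq> v ` {..K} \<union> (\<Union>m<K. {v m<..<v (Suc m)})"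
  using partition_cover[of _ v K] by (simp add: v_0 v_K subset_iff)

lemma disjoint_family_on_pieces: "disjoint_family_on (\<lambda>m. {v m<..<v (Suc m)}) {..<K}"
proof -
  have disjoint: "{v m<..<v (Suc m)} \<inter> {v n<..<v (Suc n)} = {}" if "m < n" "n < K" for m n
    using v_mono[of "Suc m" n] that by auto
  show ?thesis
    unfolding disjoint_family_on_def
  proof (intro ballI impI)
    fix m n assume "m \<in> {..<K}" "n \<in> {..<K}" "m \<noteq> n"
    then consider "m < n" "n < K" | "n < m" "m < K"
      by (meson lessThan_iff linorder_neqE_nat)
    then show "{v m<..<v (Suc m)} \<inter> {v n<..<v (Suc n)} = {}"
      by cases (use disjoint in blast)+
  qed
qed

lemma null_sets_outside_pieces: "{0<..<1} - (\<Union>m<K. {v m<..<v (Suc m)}) \<in> null_sets lborel"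
proof (rule null_sets_subset)
  show "v ` {..K} \<in> null_sets lborel"
    by (intro finite_imp_null_set_lborel) simp
  show "{0<..<1} - (\<Union>m<K. {v m<..<v (Suc m)}) \<subseteq> v ` {..K}"
    using unit_subset_pieces greaterThanLessThan_subseteq_atLeastAtMost_iff[of 0 1 0 1] by blast
qed auto

end

lemma pw_cont_strict_mono_partition:
  assumes "pw_cont_strict_mono g"
  obtains K v where "unit_partition K v"
    and "\<And>m. m < K \<Longrightarrow> strict_mono_on {v m<..<v (Suc m)} g \<or> strict_antimono_on {v m<..<v (Suc m)} g"
  using assms unfolding pw_cont_strict_mono_def unit_partition_def by blast

lemma finite_level_set:
  assumes "pw_cont_strict_mono g"
  shows "finite {u\<in>{0..1}. g u = y}"
proof -
  obtain K v where "unit_partition K v" and pieces: "\<And>m. m < K \<Longrightarrow>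
      strict_mono_on {v m<..<v (Suc m)} g \<or> strict_antimono_on {v m<..<v (Suc m)} g"
    using pw_cont_strict_mono_partition[OF assms] by blast
  then interpret unit_partition K v
    by simp
  have "{u\<in>{0..1}. g u = y} \<subseteq> v ` {..K} \<union> (\<Union>m<K. g -` {y} \<inter> {v m<..<v (Suc m)})"
    using unit_subset_pieces by auto
  moreover have "finite (g -` {y} \<inter> {v m<..<v (Suc m)})" if "m < K" for m
    using pieces[OF that]
    by (auto intro!: finite_vimage_IntI simp: strict_mono_iff_mono strict_antimono_iff_antimono)
  then have "finite (v ` {..K} \<union> (\<Union>m<K. g -` {y} \<inter> {v m<..<v (Suc m)}))"
    by (intro finite_UnI finite_imageI finite_UN_I) auto
  ultimately show ?thesis
    by (rule finite_subset)
qed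

lemma strict_mono_on_imp_measurable_left_inverse:
  fixes f :: "real \<Rightarrow> real"
  assumes mono: "strict_mono_on {a<..<b} f"
  shows "\<exists>\<psi>\<in>borel_measurable borel. \<forall>x\<in>{a<..<b}. \<psi> (f x) = x"
proof
  let ?\<psi> = "\<lambda>w. Sup (insert a {x\<in>{a<..<b}. f x \<le> w})"
  have bdd: "bdd_above (insert a {x\<in>{a<..<b}. f x \<le> w})" for w
    by (intro bdd_aboveI[of _ "max a b"]) auto
  show "?\<psi> \<in> borel_measurable borel"
    by (intro borel_measurable_mono monoI cSup_subset_mono bdd) auto
  show "\<forall>x\<in>{a<..<b}. ?\<psi> (f x) = x"
  proof
    fix x assume x: "x \<in> {a<..<b}"
    have "f y \<le> f x \<longleftrightarrow> y \<le> x" if "y \<in> {a<..<b}" for y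
      using strict_mono_on_leD[OF mono that x] strict_mono_onD[OF mono x that] by (meson not_le)
    then show "?\<psi> (f x) = x"
      using x by (intro cSup_eq_maximum) auto
  qed
qed

lemma strict_mono_or_antimono_on_imp_measurable_left_inverse:
  fixes f :: "real \<Rightarrow> real"
  assumes "strict_mono_on {a<..<b} f \<or> strict_antimono_on {a<..<b} f"
  shows "\<exists>\<psi>\<in>borel_measurable borel. \<forall>x\<in>{a<..<b}. \<psi> (f x) = x"
  using assms
proof
  assume "strict_antimono_on {a<..<b} f"
  then have "strict_mono_on {a<..<b} (\<lambda>x. - f x)"
    by (auto simp: monotone_on_def)
  then obtain \<psi> where [measurable]: "\<psi> \<in> borel_measurable borel" and \<psi>: "\<forall>x\<in>{a<..<b}. \<psi> (- f x) = x"
    using strict_mono_on_imp_measurable_left_inverse by blast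
  show ?thesis
    by (rule bexI[of _ "\<lambda>w. \<psi> (- w)"]) (use \<psi> in auto)
qed (rule strict_mono_on_imp_measurable_left_inverse)

section \<open>The rearrangement inequality\<close>

lemma separating_threshold:
  fixes f :: "'a \<Rightarrow> real"
  assumes "A \<noteq> {}" and "\<And>x. x \<in> A \<Longrightarrow> 0 \<le> f x" and "\<And>x y. x \<in> A \<Longrightarrow> y \<in> B \<Longrightarrow> f y \<le> f x"
  obtains k where "\<And>x. x \<in> A \<Longrightarrow> k \<le> f x" and "\<And>y. y \<in> B \<Longrightarrow> f y \<le> k"
proof
  have "bdd_below (f ` A)"
    using assms(2) by (intro bdd_belowI[of _ 0]) auto
  then show "Inf (f ` A) \<le> f x" if "x \<in> A" for x
    using that by (intro cInf_lower) auto
  show "f y \<le> Inf (f ` A)" if "y \<in> B" for y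
    using that assms(1,3) by (intro cInf_greatest) auto
qed

lemma nn_integral_le_cancel:
  fixes A B X Y :: "'a \<Rightarrow> ennreal"
  assumes [measurable]: "A \<in> borel_measurable M" "B \<in> borel_measurable M"
    "X \<in> borel_measurable M" "Y \<in> borel_measurable M"
    and AB: "integral\<^sup>N M A = integral\<^sup>N M B" "integral\<^sup>N M B \<noteq> \<infinity>"
    and le: "AE x in M. B x + X x \<le> A x + Y x"
  shows "integral\<^sup>N M X \<le> integral\<^sup>N M Y"
proof -
  have "integral\<^sup>N M B + integral\<^sup>N M X = (\<integral>\<^sup>+x. B x + X x \<partial>M)"
    by (simp add: nn_integral_add)
  also have "\<dots> \<le> (\<integral>\<^sup>+x. A x + Y x \<partial>M)"
    by (rule nn_integral_mono_AE[OF le])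
  also have "\<dots> = integral\<^sup>N M B + integral\<^sup>N M Y"
    by (simp add: nn_integral_add AB)
  finally show ?thesis
    using AB(2) by (simp add: ennreal_add_left_cancel_le)
qed

text \<open>The bathtub principle: a threshold \<open>k\<close> separating the values of \<open>f\<close> on \<open>S\<close> from
  those off \<open>S\<close> turns it into a pointwise inequality.\<close>
lemma bathtub_upper:
  fixes f :: "real \<Rightarrow> real"
  assumes "prob_space M" and W [measurable]: "W \<in> borel_measurable M"
    and distr_W: "distr M borel W = uniform01"
    and [measurable]: "E \<in> sets M" "S \<in> sets borel" "f \<in> borel_measurable borel"
    and size: "emeasure M E = emeasure uniform01 S"
    and nonneg: "\<And>x. 0 \<le> f x"
    and upper: "\<And>w w'. w \<in> S \<Longrightarrow> w' \<notin> S \<Longrightarrow> w \<in> {0<..<1} \<Longrightarrow> w' \<in> {0<..<1} \<Longrightarrow> f w' \<le> f w"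
  shows "(\<integral>\<^sup>+\<omega>. ennreal (f (W \<omega>)) * indicator E \<omega> \<partial>M) \<le> (\<integral>\<^sup>+w. ennreal (f w) * indicator S w \<partial>uniform01)"
proof (cases "S \<inter> {0<..<1} = {}")
  case True
  then have "E \<in> null_sets M"
    using size by (simp add: null_sets_def emeasure_uniform01)
  then have "(\<integral>\<^sup>+\<omega>. ennreal (f (W \<omega>)) * indicator E \<omega> \<partial>M) = 0"
    by (subst nn_integral_0_iff_AE) (auto dest!: AE_not_in elim!: eventually_mono)
  then show ?thesis
    by simp
next
  case False
  interpret prob_space M by fact
  obtain k where k_le: "\<And>w. w \<in> S \<inter> {0<..<1} \<Longrightarrow> k \<le> f w" and le_k: "\<And>w. w \<in> {0<..<1} - S \<Longrightarrow> f w \<le> k"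
    using separating_threshold[OF False, of f "{0<..<1} - S"] nonneg upper by blast
  have "AE \<omega> in M. ennreal k * indicator S (W \<omega>) + ennreal (f (W \<omega>)) * indicator E \<omega>
      \<le> ennreal k * indicator E \<omega> + ennreal (f (W \<omega>)) * indicator S (W \<omega>)"
    using AE_uniform01_rv[OF W distr_W]
    by eventually_elim (use k_le le_k in \<open>auto simp: indicator_def intro: ennreal_leI\<close>)
  moreover have "(\<integral>\<^sup>+\<omega>. ennreal k * indicator S (W \<omega>) \<partial>M) = ennreal k * emeasure M E"
    by (subst nn_integral_uniform01_rv[OF W distr_W]) (simp_all add: nn_integral_cmult_indicator size)
  ultimately have "(\<integral>\<^sup>+\<omega>. ennreal (f (W \<omega>)) * indicator E \<omega> \<partial>M)
      \<le> (\<integral>\<^sup>+\<omega>. ennreal (f (W \<omega>)) * indicator S (W \<omega>) \<partial>M)"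
    by (intro nn_integral_le_cancel[where A = "\<lambda>\<omega>. ennreal k * indicator E \<omega>"])
      (auto simp: nn_integral_cmult_indicator ennreal_mult_eq_top_iff)
  also have "\<dots> = (\<integral>\<^sup>+w. ennreal (f w) * indicator S w \<partial>uniform01)"
    by (rule nn_integral_uniform01_rv[OF W distr_W]) simp
  finally show ?thesis .
qed

lemma bathtub_lower:
  fixes f :: "real \<Rightarrow> real"
  assumes "prob_space M" and W [measurable]: "W \<in> borel_measurable M"
    and distr_W: "distr M borel W = uniform01"
    and [measurable]: "E \<in> sets M" "S \<in> sets borel" "f \<in> borel_measurable borel"
    and size: "emeasure M E = emeasure uniform01 S"
    and nonneg: "\<And>x. 0 \<le> f x"
    and lower: "\<And>w w'. w \<in> S \<Longrightarrow> w' \<notin> S \<Longrightarrow> w \<in> {0<..<1} \<Longrightarrow> w' \<in> {0<..<1} \<Longrightarrow> f w \<le> f w'"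
  shows "(\<integral>\<^sup>+w. ennreal (f w) * indicator S w \<partial>uniform01) \<le> (\<integral>\<^sup>+\<omega>. ennreal (f (W \<omega>)) * indicator E \<omega> \<partial>M)"
proof -
  interpret prob_space M by fact
  show ?thesis
  proof (cases "{0<..<1} \<subseteq> S")
    case True
    then have "emeasure M E = 1"
      using size by (simp add: emeasure_uniform01 Int_absorb1)
    then have "AE \<omega> in M. \<omega> \<in> E"
      by (simp add: AE_in_set_eq_1 emeasure_eq_measure)
    then have "(\<integral>\<^sup>+\<omega>. ennreal (f (W \<omega>)) * indicator E \<omega> \<partial>M) = (\<integral>\<^sup>+\<omega>. ennreal (f (W \<omega>)) \<partial>M)"
      by (intro nn_integral_cong_AE) (auto elim!: eventually_mono)
    also have "\<dots> = (\<integral>\<^sup>+w. ennreal (f w) \<partial>uniform01)"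
      by (rule nn_integral_uniform01_rv[OF W distr_W]) simp
    also have "\<dots> \<ge> (\<integral>\<^sup>+w. ennreal (f w) * indicator S w \<partial>uniform01)"
      by (intro nn_integral_mono) (simp add: indicator_def)
    finally show ?thesis .
  next
    case False
    from False have "{0<..<1} - S \<noteq> {}"
      by blast
    then obtain k where k_le: "\<And>w. w \<in> {0<..<1} - S \<Longrightarrow> k \<le> f w" and le_k: "\<And>w. w \<in> S \<inter> {0<..<1} \<Longrightarrow> f w \<le> k"
      using separating_threshold[of "{0<..<1} - S" f "S \<inter> {0<..<1}"] nonneg lower by blast
    have "AE \<omega> in M. ennreal k * indicator E \<omega> + ennreal (f (W \<omega>)) * indicator S (W \<omega>)
        \<le> ennreal k * indicator S (W \<omega>) + ennreal (f (W \<omega>)) * indicator E \<omega>"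
      using AE_uniform01_rv[OF W distr_W]
      by eventually_elim (use k_le le_k in \<open>auto simp: indicator_def intro: ennreal_leI\<close>)
    moreover have "(\<integral>\<^sup>+\<omega>. ennreal k * indicator S (W \<omega>) \<partial>M) = ennreal k * emeasure M E"
      by (subst nn_integral_uniform01_rv[OF W distr_W]) (simp_all add: nn_integral_cmult_indicator size)
    ultimately have "(\<integral>\<^sup>+\<omega>. ennreal (f (W \<omega>)) * indicator S (W \<omega>) \<partial>M)
        \<le> (\<integral>\<^sup>+\<omega>. ennreal (f (W \<omega>)) * indicator E \<omega> \<partial>M)"
      by (intro nn_integral_le_cancel[where B = "\<lambda>\<omega>. ennreal k * indicator E \<omega>"])
        (auto simp: nn_integral_cmult_indicator ennreal_mult_eq_top_iff)
    moreover have "(\<integral>\<^sup>+\<omega>. ennreal (f (W \<omega>)) * indicator S (W \<omega>) \<partial>M) = (\<integral>\<^sup>+w. ennreal (f w) * indicator S w \<partial>uniform01)"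
      by (rule nn_integral_uniform01_rv[OF W distr_W]) simp
    ultimately show ?thesis
      by simp
  qed
qed

lemma nn_integral_mult_layer_cake:
  fixes f g :: "'a \<Rightarrow> real"
  assumes "sigma_finite_measure M" and [measurable]: "f \<in> borel_measurable M" "g \<in> borel_measurable M"
    and nonneg: "\<And>x. 0 \<le> f x" "\<And>x. 0 \<le> g x"
  shows "(\<integral>\<^sup>+x. ennreal (f x * g x) \<partial>M)
    = (\<integral>\<^sup>+t\<in>{0..}. (\<integral>\<^sup>+x. ennreal (f x) * indicator {x \<in> space M. t < g x} x \<partial>M) \<partial>lborel)"
proof -
  interpret pair_sigma_finite M lborel
    using assms(1) by (intro pair_sigma_finite.intro) (auto intro: lborel.sigma_finite_measure_axioms)
  have "(\<integral>\<^sup>+t. (if 0 \<le> t \<and> t < g x then ennreal (f x) else 0) \<partial>lborel) = ennreal (f x * g x)" for x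
  proof -
    have "(\<integral>\<^sup>+t. (if 0 \<le> t \<and> t < g x then ennreal (f x) else 0) \<partial>lborel)
        = (\<integral>\<^sup>+t. ennreal (f x) * indicator {0..<g x} t \<partial>lborel)"
      by (intro nn_integral_cong) (simp add: indicator_def)
    then show ?thesis
      using nonneg by (simp add: nn_integral_cmult_indicator ennreal_mult)
  qed
  then have "(\<integral>\<^sup>+x. ennreal (f x * g x) \<partial>M)
      = (\<integral>\<^sup>+x. (\<integral>\<^sup>+t. (if 0 \<le> t \<and> t < g x then ennreal (f x) else 0) \<partial>lborel) \<partial>M)"
    by simp
  also have "\<dots> = (\<integral>\<^sup>+t. (\<integral>\<^sup>+x. (if 0 \<le> t \<and> t < g x then ennreal (f x) else 0) \<partial>M) \<partial>lborel)"
    by (rule Fubini'[symmetric]) measurable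
  also have "\<dots> = (\<integral>\<^sup>+t\<in>{0..}. (\<integral>\<^sup>+x. ennreal (f x) * indicator {x \<in> space M. t < g x} x \<partial>M) \<partial>lborel)"
    by (intro nn_integral_cong) (auto simp: indicator_def nn_integral_cmult[symmetric] intro!: nn_integral_cong)
  finally show ?thesis .
qed

definition comonotone_on :: "'a set \<Rightarrow> ('a \<Rightarrow> real) \<Rightarrow> ('a \<Rightarrow> real) \<Rightarrow> bool" where
  "comonotone_on S f g \<longleftrightarrow> (\<forall>x\<in>S. \<forall>y\<in>S. 0 \<le> (f x - f y) * (g x - g y))"

lemma comonotone_on_if_mono_on:
  fixes f g :: "'a :: linorder \<Rightarrow> real"
  assumes f: "mono_on S f" and g: "mono_on S g"
  shows "comonotone_on S f g"
  unfolding comonotone_on_def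
proof (intro ballI)
  fix x y assume xy: "x \<in> S" "y \<in> S"
  show "0 \<le> (f x - f y) * (g x - g y)"
  proof (cases "x \<le> y")
    case True
    then show ?thesis
      using mono_onD[OF f xy] mono_onD[OF g xy] by (intro mult_nonpos_nonpos) auto
  next
    case False
    then show ?thesis
      using mono_onD[OF f xy(2,1)] mono_onD[OF g xy(2,1)] by (intro mult_nonneg_nonneg) auto
  qed
qed

lemma comonotone_on_uminus: "comonotone_on S f g \<Longrightarrow> comonotone_on S (\<lambda>x. - f x) (\<lambda>x. - g x)"
  by (simp add: comonotone_on_def algebra_simps)

lemma comonotone_on_comp:
  assumes "comonotone_on S f g" and \<phi>: "mono \<phi>" and \<psi>: "mono \<psi>"
  shows "comonotone_on S (\<lambda>x. \<phi> (f x)) (\<lambda>x. \<psi> (g x))"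
  unfolding comonotone_on_def
proof (intro ballI)
  fix x y assume "x \<in> S" "y \<in> S"
  then have "0 \<le> (f x - f y) * (g x - g y)"
    using assms(1) by (simp add: comonotone_on_def)
  then have "f y \<le> f x \<and> g y \<le> g x \<or> f x \<le> f y \<and> g x \<le> g y"
    by (simp add: zero_le_mult_iff)
  then show "0 \<le> (\<phi> (f x) - \<phi> (f y)) * (\<psi> (g x) - \<psi> (g y))"
  proof (elim disjE conjE)
    assume "f y \<le> f x" "g y \<le> g x"
    then show ?thesis
      using monoD[OF \<phi>] monoD[OF \<psi>] by (intro mult_nonneg_nonneg) (auto simp: le_diff_eq)
  next
    assume "f x \<le> f y" "g x \<le> g y"
    then show ?thesis
      using monoD[OF \<phi>] monoD[OF \<psi>] by (intro mult_nonpos_nonpos) (auto simp: diff_le_eq)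
  qed
qed

lemma rearrangement_nn_upper:
  fixes f g :: "real \<Rightarrow> real"
  assumes "prob_space M"
    and W [measurable]: "W \<in> borel_measurable M" and distr_W: "distr M borel W = uniform01"
    and W' [measurable]: "W' \<in> borel_measurable M" and distr_W': "distr M borel W' = uniform01"
    and [measurable]: "f \<in> borel_measurable borel" "g \<in> borel_measurable borel"
    and nonneg: "\<And>x. 0 \<le> f x" "\<And>x. 0 \<le> g x"
    and comonotone: "comonotone_on {0<..<1} f g"
  shows "(\<integral>\<^sup>+\<omega>. ennreal (f (W \<omega>) * g (W' \<omega>)) \<partial>M) \<le> (\<integral>\<^sup>+w. ennreal (f w * g w) \<partial>uniform01)"
proof -
  interpret prob_space M by fact
  have level: "(\<integral>\<^sup>+\<omega>. ennreal (f (W \<omega>)) * indicator {\<omega> \<in> space M. t < g (W' \<omega>)} \<omega> \<partial>M)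
      \<le> (\<integral>\<^sup>+w. ennreal (f w) * indicator {w. t < g w} w \<partial>uniform01)" for t
  proof (rule bathtub_upper[OF prob_space_axioms W distr_W])
    have "emeasure uniform01 {w. t < g w} = emeasure (distr M borel W') {w. t < g w}"
      by (simp add: distr_W')
    then show "emeasure M {\<omega> \<in> space M. t < g (W' \<omega>)} = emeasure uniform01 {w. t < g w}"
      by (simp add: emeasure_distr vimage_def Int_def conj_commute)
    show "f w' \<le> f w" if "w \<in> {w. t < g w}" "w' \<notin> {w. t < g w}" "w \<in> {0<..<1}" "w' \<in> {0<..<1}" for w w'
    proof -
      have "0 \<le> (f w - f w') * (g w - g w')"
        using comonotone that(3,4) by (simp add: comonotone_on_def)
      moreover have "g w' < g w"
        using that(1,2) by simp
      ultimately show ?thesis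
        by (simp add: zero_le_mult_iff)
    qed
  qed (use nonneg in simp_all)
  have "(\<integral>\<^sup>+\<omega>. ennreal (f (W \<omega>) * g (W' \<omega>)) \<partial>M)
      = (\<integral>\<^sup>+t\<in>{0..}. (\<integral>\<^sup>+\<omega>. ennreal (f (W \<omega>)) * indicator {\<omega> \<in> space M. t < g (W' \<omega>)} \<omega> \<partial>M) \<partial>lborel)"
    by (rule nn_integral_mult_layer_cake) (simp_all add: nonneg sigma_finite_measure_axioms)
  also have "\<dots> \<le> (\<integral>\<^sup>+t\<in>{0..}. (\<integral>\<^sup>+w. ennreal (f w) * indicator {w. t < g w} w \<partial>uniform01) \<partial>lborel)"
    by (intro nn_integral_mono mult_right_mono level) simp
  also have "\<dots> = (\<integral>\<^sup>+w. ennreal (f w * g w) \<partial>uniform01)"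
    using nn_integral_mult_layer_cake[of uniform01 f g] nonneg
    by (simp add: uniform01.sigma_finite_measure_axioms)
  finally show ?thesis .
qed

lemma rearrangement_nn_lower:
  fixes f g :: "real \<Rightarrow> real"
  assumes "prob_space M"
    and W [measurable]: "W \<in> borel_measurable M" and distr_W: "distr M borel W = uniform01"
    and W' [measurable]: "W' \<in> borel_measurable M" and distr_W': "distr M borel W' = uniform01"
    and [measurable]: "f \<in> borel_measurable borel" "g \<in> borel_measurable borel"
    and nonneg: "\<And>x. 0 \<le> f x" "\<And>x. 0 \<le> g x"
    and countermonotone: "comonotone_on {0<..<1} f (\<lambda>x. - g x)"
  shows "(\<integral>\<^sup>+w. ennreal (f w * g w) \<partial>uniform01) \<le> (\<integral>\<^sup>+\<omega>. ennreal (f (W \<omega>) * g (W' \<omega>)) \<partial>M)"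
proof -
  interpret prob_space M by fact
  have level: "(\<integral>\<^sup>+w. ennreal (f w) * indicator {w. t < g w} w \<partial>uniform01)
      \<le> (\<integral>\<^sup>+\<omega>. ennreal (f (W \<omega>)) * indicator {\<omega> \<in> space M. t < g (W' \<omega>)} \<omega> \<partial>M)" for t
  proof (rule bathtub_lower[OF prob_space_axioms W distr_W])
    have "emeasure uniform01 {w. t < g w} = emeasure (distr M borel W') {w. t < g w}"
      by (simp add: distr_W')
    then show "emeasure M {\<omega> \<in> space M. t < g (W' \<omega>)} = emeasure uniform01 {w. t < g w}"
      by (simp add: emeasure_distr vimage_def Int_def conj_commute)
    show "f w \<le> f w'" if "w \<in> {w. t < g w}" "w' \<notin> {w. t < g w}" "w \<in> {0<..<1}" "w' \<in> {0<..<1}" for w w'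
    proof -
      have "0 \<le> (f w - f w') * (- g w - - g w')"
        using countermonotone that(3,4) by (simp add: comonotone_on_def)
      moreover have "g w' < g w"
        using that(1,2) by simp
      ultimately show ?thesis
        by (simp add: zero_le_mult_iff)
    qed
  qed (use nonneg in simp_all)
  have "(\<integral>\<^sup>+w. ennreal (f w * g w) \<partial>uniform01)
      = (\<integral>\<^sup>+t\<in>{0..}. (\<integral>\<^sup>+w. ennreal (f w) * indicator {w. t < g w} w \<partial>uniform01) \<partial>lborel)"
    using nn_integral_mult_layer_cake[of uniform01 f g] nonneg
    by (simp add: uniform01.sigma_finite_measure_axioms)
  also have "\<dots> \<le> (\<integral>\<^sup>+t\<in>{0..}. (\<integral>\<^sup>+\<omega>. ennreal (f (W \<omega>)) * indicator {\<omega> \<in> space M. t < g (W' \<omega>)} \<omega> \<partial>M) \<partial>lborel)"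
    by (intro nn_integral_mono mult_right_mono level) simp
  also have "\<dots> = (\<integral>\<^sup>+\<omega>. ennreal (f (W \<omega>) * g (W' \<omega>)) \<partial>M)"
    by (rule nn_integral_mult_layer_cake[symmetric]) (simp_all add: nonneg sigma_finite_measure_axioms)
  finally show ?thesis .
qed

lemma integrable_mult_if_integrable_sq:
  fixes X Y :: "'a \<Rightarrow> real"
  assumes [measurable]: "X \<in> borel_measurable M" "Y \<in> borel_measurable M"
    and "integrable M (\<lambda>\<omega>. (X \<omega>)\<^sup>2)" "integrable M (\<lambda>\<omega>. (Y \<omega>)\<^sup>2)"
  shows "integrable M (\<lambda>\<omega>. X \<omega> * Y \<omega>)"
proof (rule Bochner_Integration.integrable_bound)
  show "integrable M (\<lambda>\<omega>. (X \<omega>)\<^sup>2 + (Y \<omega>)\<^sup>2)"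
    using assms(3,4) by simp
  have "\<bar>x * y\<bar> \<le> x\<^sup>2 + y\<^sup>2" for x y :: real
  proof -
    have "2 * (\<bar>x\<bar> * \<bar>y\<bar>) \<le> x\<^sup>2 + y\<^sup>2"
      using sum_squares_bound[of "\<bar>x\<bar>" "\<bar>y\<bar>"] by (simp add: mult.assoc)
    moreover have "0 \<le> \<bar>x\<bar> * \<bar>y\<bar>"
      by simp
    ultimately show ?thesis
      unfolding abs_mult by linarith
  qed
  then show "AE \<omega> in M. norm (X \<omega> * Y \<omega>) \<le> norm ((X \<omega>)\<^sup>2 + (Y \<omega>)\<^sup>2)"
    by simp
qed measurable

lemma integral_le_if_nn_integral_le:
  fixes F :: "'a \<Rightarrow> real" and G :: "'b \<Rightarrow> real"
  assumes "integrable M F" "integrable N G" "\<And>x. 0 \<le> F x" "\<And>x. 0 \<le> G x"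
    and "(\<integral>\<^sup>+x. ennreal (F x) \<partial>M) \<le> (\<integral>\<^sup>+x. ennreal (G x) \<partial>N)"
  shows "integral\<^sup>L M F \<le> integral\<^sup>L N G"
  using assms by (simp add: nn_integral_eq_integral integral_nonneg)

lemma integrable_max_mult_max:
  fixes F G :: "'a \<Rightarrow> real"
  assumes [measurable]: "F \<in> borel_measurable M" "G \<in> borel_measurable M"
    and sq: "integrable M (\<lambda>x. (F x)\<^sup>2)" "integrable M (\<lambda>x. (G x)\<^sup>2)"
  shows "integrable M (\<lambda>x. max (F x) 0 * max (G x) 0)"
proof (rule integrable_mult_if_integrable_sq)
  show "integrable M (\<lambda>x. (max (F x) 0)\<^sup>2)"
    by (rule Bochner_Integration.integrable_bound[OF sq(1)]) (auto simp: max_def)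
  show "integrable M (\<lambda>x. (max (G x) 0)\<^sup>2)"
    by (rule Bochner_Integration.integrable_bound[OF sq(2)]) (auto simp: max_def)
qed measurable

lemma integral_mult_eq_sign_parts:
  fixes F G :: "'a \<Rightarrow> real"
  assumes F [measurable]: "F \<in> borel_measurable M" and G [measurable]: "G \<in> borel_measurable M"
    and sq: "integrable M (\<lambda>x. (F x)\<^sup>2)" "integrable M (\<lambda>x. (G x)\<^sup>2)"
  shows "(\<integral>x. F x * G x \<partial>M) = (\<integral>x. max (F x) 0 * max (G x) 0 \<partial>M) - (\<integral>x. max (F x) 0 * max (- G x) 0 \<partial>M)
    - (\<integral>x. max (- F x) 0 * max (G x) 0 \<partial>M) + (\<integral>x. max (- F x) 0 * max (- G x) 0 \<partial>M)"
proof -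
  have F': "(\<lambda>x. - F x) \<in> borel_measurable M"
    by measurable
  have G': "(\<lambda>x. - G x) \<in> borel_measurable M"
    by measurable
  have sq': "integrable M (\<lambda>x. (- F x)\<^sup>2)" "integrable M (\<lambda>x. (- G x)\<^sup>2)"
    using sq by simp_all
  note pp = integrable_max_mult_max[OF F G sq(1,2)] and pn = integrable_max_mult_max[OF F G' sq(1) sq'(2)]
    and np = integrable_max_mult_max[OF F' G sq'(1) sq(2)] and nn = integrable_max_mult_max[OF F' G' sq'(1,2)]
  have split: "x * y = max x 0 * max y 0 - max x 0 * max (- y) 0 - max (- x) 0 * max y 0 + max (- x) 0 * max (- y) 0"
    for x y :: real
    by (cases "0 \<le> x"; cases "0 \<le> y") (auto simp: max_def)
  have "(\<integral>x. F x * G x \<partial>M) = (\<integral>x. max (F x) 0 * max (G x) 0 - max (F x) 0 * max (- G x) 0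
      - max (- F x) 0 * max (G x) 0 + max (- F x) 0 * max (- G x) 0 \<partial>M)"
    by (intro Bochner_Integration.integral_cong refl split)
  also note Bochner_Integration.integral_add[OF Bochner_Integration.integrable_diff[OF Bochner_Integration.integrable_diff[OF pp pn] np] nn]
  also note Bochner_Integration.integral_diff[OF Bochner_Integration.integrable_diff[OF pp pn] np]
  also note Bochner_Integration.integral_diff[OF pp pn]
  finally show ?thesis .
qed

lemma integral_mult_le_by_sign_parts:
  fixes A B :: "'a \<Rightarrow> real" and A' B' :: "'b \<Rightarrow> real"
  assumes [measurable]: "A \<in> borel_measurable M" "B \<in> borel_measurable M"
    "A' \<in> borel_measurable N" "B' \<in> borel_measurable N"
    and sq: "integrable M (\<lambda>x. (A x)\<^sup>2)" "integrable M (\<lambda>x. (B x)\<^sup>2)"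
      "integrable N (\<lambda>y. (A' y)\<^sup>2)" "integrable N (\<lambda>y. (B' y)\<^sup>2)"
    and pp: "(\<integral>\<^sup>+x. ennreal (max (A x) 0 * max (B x) 0) \<partial>M) \<le> (\<integral>\<^sup>+y. ennreal (max (A' y) 0 * max (B' y) 0) \<partial>N)"
    and nn: "(\<integral>\<^sup>+x. ennreal (max (- A x) 0 * max (- B x) 0) \<partial>M)
      \<le> (\<integral>\<^sup>+y. ennreal (max (- A' y) 0 * max (- B' y) 0) \<partial>N)"
    and pn: "(\<integral>\<^sup>+y. ennreal (max (A' y) 0 * max (- B' y) 0) \<partial>N)
      \<le> (\<integral>\<^sup>+x. ennreal (max (A x) 0 * max (- B x) 0) \<partial>M)"
    and np: "(\<integral>\<^sup>+y. ennreal (max (- A' y) 0 * max (B' y) 0) \<partial>N)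
      \<le> (\<integral>\<^sup>+x. ennreal (max (- A x) 0 * max (B x) 0) \<partial>M)"
  shows "(\<integral>x. A x * B x \<partial>M) \<le> (\<integral>y. A' y * B' y \<partial>N)"
proof -
  have sq': "integrable M (\<lambda>x. (- A x)\<^sup>2)" "integrable M (\<lambda>x. (- B x)\<^sup>2)"
      "integrable N (\<lambda>y. (- A' y)\<^sup>2)" "integrable N (\<lambda>y. (- B' y)\<^sup>2)"
    using sq by simp_all
  note int = integrable_max_mult_max[OF _ _ sq(1,2)] integrable_max_mult_max[OF _ _ sq'(1,2)]
    integrable_max_mult_max[OF _ _ sq(1) sq'(2)] integrable_max_mult_max[OF _ _ sq'(1) sq(2)]
    integrable_max_mult_max[OF _ _ sq(3,4)] integrable_max_mult_max[OF _ _ sq'(3,4)]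
    integrable_max_mult_max[OF _ _ sq(3) sq'(4)] integrable_max_mult_max[OF _ _ sq'(3) sq(4)]
  have "(\<integral>x. max (A x) 0 * max (B x) 0 \<partial>M) \<le> (\<integral>y. max (A' y) 0 * max (B' y) 0 \<partial>N)"
    "(\<integral>x. max (- A x) 0 * max (- B x) 0 \<partial>M) \<le> (\<integral>y. max (- A' y) 0 * max (- B' y) 0 \<partial>N)"
    "(\<integral>y. max (A' y) 0 * max (- B' y) 0 \<partial>N) \<le> (\<integral>x. max (A x) 0 * max (- B x) 0 \<partial>M)"
    "(\<integral>y. max (- A' y) 0 * max (B' y) 0 \<partial>N) \<le> (\<integral>x. max (- A x) 0 * max (B x) 0 \<partial>M)"
    by (intro integral_le_if_nn_integral_le pp nn pn np int; simp)+
  then show ?thesis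
    using integral_mult_eq_sign_parts[OF _ _ sq(1,2)] integral_mult_eq_sign_parts[OF _ _ sq(3,4)]
    by simp
qed

lemma rearrangement_inequality:
  fixes a b :: "real \<Rightarrow> real"
  assumes "prob_space M"
    and W [measurable]: "W \<in> borel_measurable M" and distr_W: "distr M borel W = uniform01"
    and W' [measurable]: "W' \<in> borel_measurable M" and distr_W': "distr M borel W' = uniform01"
    and [measurable]: "a \<in> borel_measurable borel" "b \<in> borel_measurable borel"
    and mono: "mono_on {0<..<1} a" "mono_on {0<..<1} b"
    and sq: "integrable uniform01 (\<lambda>w. (a w)\<^sup>2)" "integrable uniform01 (\<lambda>w. (b w)\<^sup>2)"
  shows "(\<integral>\<omega>. a (W \<omega>) * b (W' \<omega>) \<partial>M) \<le> (\<integral>w. a w * b w \<partial>uniform01)"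
proof (rule integral_mult_le_by_sign_parts)
  show "integrable M (\<lambda>\<omega>. (a (W \<omega>))\<^sup>2)"
    using sq(1) by (simp add: distr_W[symmetric] integrable_distr_eq)
  show "integrable M (\<lambda>\<omega>. (b (W' \<omega>))\<^sup>2)"
    using sq(2) by (simp add: distr_W'[symmetric] integrable_distr_eq)
  have co: "comonotone_on {0<..<1} a b"
    by (rule comonotone_on_if_mono_on[OF mono])
  note co' = comonotone_on_uminus[OF co]
  have pos: "mono (\<lambda>x::real. max x 0)" and neg: "mono (\<lambda>x::real. min x 0)"
    by (auto intro: monoI)
  have min_eq: "(\<lambda>x. - max (- f x) 0) = (\<lambda>x. min (f x) 0)" for f :: "real \<Rightarrow> real"
    by (auto simp: fun_eq_iff max_def min_def)
  note nn_upper = rearrangement_nn_upper[OF \<open>prob_space M\<close> W distr_W W' distr_W']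
    and nn_lower = rearrangement_nn_lower[OF \<open>prob_space M\<close> W distr_W W' distr_W']
  show "(\<integral>\<^sup>+\<omega>. ennreal (max (a (W \<omega>)) 0 * max (b (W' \<omega>)) 0) \<partial>M)
      \<le> (\<integral>\<^sup>+w. ennreal (max (a w) 0 * max (b w) 0) \<partial>uniform01)"
    by (rule nn_upper) (simp_all add: comonotone_on_comp[OF co pos pos])
  show "(\<integral>\<^sup>+\<omega>. ennreal (max (- a (W \<omega>)) 0 * max (- b (W' \<omega>)) 0) \<partial>M)
      \<le> (\<integral>\<^sup>+w. ennreal (max (- a w) 0 * max (- b w) 0) \<partial>uniform01)"
    by (rule nn_upper) (simp_all add: comonotone_on_comp[OF co' pos pos])
  show "(\<integral>\<^sup>+w. ennreal (max (a w) 0 * max (- b w) 0) \<partial>uniform01)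
      \<le> (\<integral>\<^sup>+\<omega>. ennreal (max (a (W \<omega>)) 0 * max (- b (W' \<omega>)) 0) \<partial>M)"
    by (rule nn_lower) (simp_all add: min_eq comonotone_on_comp[OF co pos neg])
  show "(\<integral>\<^sup>+w. ennreal (max (- a w) 0 * max (b w) 0) \<partial>uniform01)
      \<le> (\<integral>\<^sup>+\<omega>. ennreal (max (- a (W \<omega>)) 0 * max (b (W' \<omega>)) 0) \<partial>M)"
    using comonotone_on_comp[OF co' pos neg] by (intro nn_lower) (simp_all add: min_eq[of "\<lambda>x. - b x", simplified])
qed (use sq in simp_all)

section \<open>Couplings along a piecewise invertible map\<close>

lemma measurable_fst_borel [measurable]: "fst \<in> borel_measurable (borel :: (real \<times> real) measure)"
  using measurable_fst[of "borel :: real measure" "borel :: real measure"] by (simp add: borel_prod)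

lemma measurable_snd_borel [measurable]: "snd \<in> borel_measurable (borel :: (real \<times> real) measure)"
  using measurable_snd[of "borel :: real measure" "borel :: real measure"] by (simp add: borel_prod)

locale piecewise_invertible_mpt =
  fixes T :: "real \<Rightarrow> real" and K :: nat and P :: "nat \<Rightarrow> real set" and \<psi> :: "nat \<Rightarrow> real \<Rightarrow> real"
  assumes measurable_T [measurable]: "T \<in> borel_measurable borel"
    and distr_T: "distr uniform01 borel T = uniform01"
    and sets_P [measurable]: "\<And>m. P m \<in> sets borel"
    and disjoint_P: "disjoint_family_on P {..<K}"
    and null_outside_P: "{0<..<1} - (\<Union>m<K. P m) \<in> null_sets lborel"
    and measurable_\<psi>: "\<And>m. m < K \<Longrightarrow> \<psi> m \<in> borel_measurable borel"
    and \<psi>_T: "\<And>m x. m < K \<Longrightarrow> x \<in> P m \<Longrightarrow> \<psi> m (T x) = x"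
begin

lemma AE_in_P: "AE x in uniform01. x \<in> (\<Union>m<K. P m)"
proof -
  have "({0<..<1} - (\<Union>m<K. P m)) \<inter> {0<..<1} = {0<..<1} - (\<Union>m<K. P m)"
    by blast
  then have "{0<..<1} - (\<Union>m<K. P m) \<in> null_sets uniform01"
    using null_outside_P by (simp add: null_sets_def emeasure_uniform01)
  then have "AE x in uniform01. x \<notin> {0<..<1} - (\<Union>m<K. P m)"
    by (rule AE_not_in)
  then show ?thesis
    using AE_uniform01 by eventually_elim auto
qed

lemma sum_emeasure_P:
  assumes [measurable]: "A \<in> sets borel"
  shows "(\<Sum>m<K. emeasure uniform01 (A \<inter> P m)) = emeasure uniform01 A"
proof -
  have "disjoint_family_on (\<lambda>m. A \<inter> P m) {..<K}"
    using disjoint_P by (auto simp: disjoint_family_on_def)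
  then have "(\<Sum>m<K. emeasure uniform01 (A \<inter> P m)) = emeasure uniform01 (\<Union>m<K. A \<inter> P m)"
    by (intro sum_emeasure) auto
  also have "(\<Union>m<K. A \<inter> P m) = A \<inter> (\<Union>m<K. P m)"
    by blast
  also have "emeasure uniform01 (A \<inter> (\<Union>m<K. P m)) = emeasure uniform01 A"
    using AE_in_P by (intro emeasure_eq_AE) auto
  finally show ?thesis .
qed

definition piece_measure :: "nat \<Rightarrow> real measure" where
  "piece_measure m = distr (density uniform01 (indicator (P m))) borel T"

lemma sets_piece_measure [simp, measurable_cong]: "sets (piece_measure m) = sets borel"
  by (simp add: piece_measure_def)

lemma sets_vimage_T [measurable]: "A \<in> sets borel \<Longrightarrow> T -` A \<in> sets borel"
  using measurable_sets_borel[OF measurable_T] by simp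

lemma nn_integral_indicator_T:
  assumes [measurable]: "A \<in> sets borel"
  shows "(\<integral>\<^sup>+x. indicator (P m) x * indicator A (T x) \<partial>uniform01) = emeasure uniform01 (T -` A \<inter> P m)"
proof -
  have "(\<integral>\<^sup>+x. indicator (P m) x * indicator A (T x) \<partial>uniform01) = (\<integral>\<^sup>+x. indicator (T -` A \<inter> P m) x \<partial>uniform01)"
    by (intro nn_integral_cong) (auto split: split_indicator)
  also have "\<dots> = emeasure uniform01 (T -` A \<inter> P m)"
    by (rule nn_integral_indicator) measurable
  finally show ?thesis .
qed

lemma emeasure_piece_measure:
  assumes [measurable]: "A \<in> sets borel"
  shows "emeasure (piece_measure m) A = emeasure uniform01 (T -` A \<inter> P m)"
proof -
  have "emeasure (piece_measure m) A = emeasure (density uniform01 (indicator (P m))) (T -` A)"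
    by (simp add: piece_measure_def emeasure_distr)
  also have "\<dots> = (\<integral>\<^sup>+x. indicator (P m) x * indicator A (T x) \<partial>uniform01)"
    by (subst emeasure_density) (simp_all add: indicator_vimage)
  finally show ?thesis
    by (simp add: nn_integral_indicator_T)
qed

lemma sum_emeasure_piece_measure:
  assumes [measurable]: "A \<in> sets borel"
  shows "(\<Sum>m<K. emeasure (piece_measure m) A) = emeasure uniform01 A"
proof -
  have "(\<Sum>m<K. emeasure (piece_measure m) A) = emeasure uniform01 (T -` A)"
    by (simp add: emeasure_piece_measure sum_emeasure_P[of "T -` A"])
  also have "\<dots> = emeasure (distr uniform01 borel T) A"
    by (simp add: emeasure_distr)
  finally show ?thesis
    by (simp add: distr_T)
qed

lemma absolutely_continuous_piece_measure: "m < K \<Longrightarrow> absolutely_continuous uniform01 (piece_measure m)"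
  unfolding absolutely_continuous_def
proof
  fix N assume m: "m < K" and N: "N \<in> null_sets uniform01"
  then have "emeasure (piece_measure m) N \<le> (\<Sum>j<K. emeasure (piece_measure j) N)"
    by (intro member_le_sum) auto
  also have "\<dots> = 0"
    using N by (simp add: sum_emeasure_piece_measure null_sets_def)
  finally show "N \<in> null_sets (piece_measure m)"
    using N by (auto simp: null_sets_def)
qed

definition piece_density :: "nat \<Rightarrow> real \<Rightarrow> ennreal" where
  "piece_density m = RN_deriv uniform01 (piece_measure m)"

lemma measurable_piece_density [measurable]: "piece_density m \<in> borel_measurable borel"
  using borel_measurable_RN_deriv[of uniform01 "piece_measure m"] by (simp add: piece_density_def)

lemma nn_integral_piece_density:
  assumes m: "m < K" and [measurable]: "F \<in> borel_measurable borel"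
  shows "(\<integral>\<^sup>+w. piece_density m w * F w \<partial>uniform01) = (\<integral>\<^sup>+x. indicator (P m) x * F (T x) \<partial>uniform01)"
proof -
  have "(\<integral>\<^sup>+w. piece_density m w * F w \<partial>uniform01) = integral\<^sup>N (piece_measure m) F"
    unfolding piece_density_def
    by (rule uniform01.RN_deriv_nn_integral[symmetric]) (auto intro: absolutely_continuous_piece_measure m)
  also have "\<dots> = (\<integral>\<^sup>+x. indicator (P m) x * F (T x) \<partial>uniform01)"
    by (simp add: piece_measure_def nn_integral_distr nn_integral_density)
  finally show ?thesis .
qed

lemma AE_sum_piece_density: "AE w in uniform01. (\<Sum>m<K. piece_density m w) = 1"
proof (rule uniform01.density_unique2)
  fix A :: "real set" assume "A \<in> sets uniform01"
  then have A [measurable]: "A \<in> sets borel"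
    by simp
  have "(\<integral>\<^sup>+w\<in>A. (\<Sum>m<K. piece_density m w) \<partial>uniform01) = (\<Sum>m<K. \<integral>\<^sup>+w. piece_density m w * indicator A w \<partial>uniform01)"
    by (subst nn_integral_sum[symmetric]) (auto simp: sum_distrib_right)
  also have "\<dots> = (\<Sum>m<K. emeasure uniform01 (T -` A \<inter> P m))"
    by (intro sum.cong refl) (simp add: nn_integral_piece_density nn_integral_indicator_T[OF A])
  also have "\<dots> = emeasure uniform01 A"
    using sum_emeasure_piece_measure[of A] by (simp add: emeasure_piece_measure)
  finally show "(\<integral>\<^sup>+w\<in>A. (\<Sum>m<K. piece_density m w) \<partial>uniform01) = (\<integral>\<^sup>+w\<in>A. 1 \<partial>uniform01)"
    by simp
qed auto

context
  fixes R :: "real \<Rightarrow> real"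
  assumes measurable_R [measurable]: "R \<in> borel_measurable borel"
    and distr_R: "distr uniform01 borel R = uniform01"
begin

text \<open>Given \<open>u\<close>, choose the piece \<open>m\<close> with probability \<open>piece_density m (R u)\<close> and pair \<open>u\<close>
  with the preimage of \<open>R u\<close> under \<open>T\<close> in that piece.\<close>
definition coupling :: "(real \<times> real) measure" where
  "coupling = distr (density (count_space {..<K} \<Otimes>\<^sub>M uniform01) (\<lambda>(m, u). piece_density m (R u)))
     borel (\<lambda>(m, u). (u, \<psi> m (R u)))"

lemma measurable_coupling_density:
  "(\<lambda>(m, u). piece_density m (R u)) \<in> borel_measurable (count_space {..<K} \<Otimes>\<^sub>M uniform01)"
proof -
  have "(\<lambda>x. piece_density (fst x) (R (snd x))) \<in> borel_measurable (count_space {..<K} \<Otimes>\<^sub>M uniform01)"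
    by (rule measurable_compose_countable'[where I = "{..<K}"]) (auto intro: measurable_fst'')
  then show ?thesis
    by (simp add: case_prod_beta')
qed

lemma measurable_coupling_map:
  "(\<lambda>(m, u). (u, \<psi> m (R u))) \<in> count_space {..<K} \<Otimes>\<^sub>M uniform01 \<rightarrow>\<^sub>M borel"
proof -
  have "(\<lambda>x. \<psi> (fst x) (R (snd x))) \<in> borel_measurable (count_space {..<K} \<Otimes>\<^sub>M uniform01)"
    by (rule measurable_compose_countable'[where I = "{..<K}"])
      (auto intro: measurable_compose[OF _ measurable_\<psi>] measurable_fst'')
  then have "(\<lambda>x. (snd x, \<psi> (fst x) (R (snd x)))) \<in> count_space {..<K} \<Otimes>\<^sub>M uniform01 \<rightarrow>\<^sub>M borel \<Otimes>\<^sub>M borel"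
    by measurable
  then show ?thesis
    by (simp add: case_prod_beta' borel_prod)
qed

lemma nn_integral_coupling:
  assumes [measurable]: "F \<in> borel_measurable borel"
  shows "(\<integral>\<^sup>+q. F q \<partial>coupling) = (\<Sum>m<K. \<integral>\<^sup>+u. piece_density m (R u) * F (u, \<psi> m (R u)) \<partial>uniform01)"
proof -
  note [measurable] = measurable_coupling_density measurable_coupling_map
  have "(\<integral>\<^sup>+q. F q \<partial>coupling)
      = (\<integral>\<^sup>+x. (case x of (m, u) \<Rightarrow> piece_density m (R u) * F (u, \<psi> m (R u))) \<partial>count_space {..<K} \<Otimes>\<^sub>M uniform01)"
    unfolding coupling_def by (simp add: nn_integral_distr nn_integral_density case_prod_beta')
  also have "\<dots> = (\<integral>\<^sup>+m. \<integral>\<^sup>+u. piece_density m (R u) * F (u, \<psi> m (R u)) \<partial>uniform01 \<partial>count_space {..<K})"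
  proof -
    have "(\<lambda>(m, u). piece_density m (R u) * F (u, \<psi> m (R u))) \<in> borel_measurable (count_space {..<K} \<Otimes>\<^sub>M uniform01)"
      using measurable_coupling_density measurable_coupling_map
      by (simp add: case_prod_beta') measurable
    from uniform01.nn_integral_fst[OF this] show ?thesis
      by simp
  qed
  also have "\<dots> = (\<Sum>m<K. \<integral>\<^sup>+u. piece_density m (R u) * F (u, \<psi> m (R u)) \<partial>uniform01)"
    by (simp add: nn_integral_count_space_finite)
  finally show ?thesis .
qed

lemma sets_coupling [simp, measurable_cong]: "sets coupling = sets borel"
  by (simp add: coupling_def)

lemma space_coupling [simp]: "space coupling = UNIV"
  by (simp add: coupling_def)

lemma nn_integral_piece_density_R:
  assumes "m < K" and [measurable]: "G \<in> borel_measurable borel"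
  shows "(\<integral>\<^sup>+u. piece_density m (R u) * G (R u) \<partial>uniform01) = (\<integral>\<^sup>+x. indicator (P m) x * G (T x) \<partial>uniform01)"
proof -
  have "(\<integral>\<^sup>+u. piece_density m (R u) * G (R u) \<partial>uniform01) = (\<integral>\<^sup>+w. piece_density m w * G w \<partial>uniform01)"
    by (rule nn_integral_uniform01_rv[OF _ distr_R]) measurable
  also have "\<dots> = (\<integral>\<^sup>+x. indicator (P m) x * G (T x) \<partial>uniform01)"
    by (rule nn_integral_piece_density) (use assms in auto)
  finally show ?thesis .
qed

lemma emeasure_coupling_snd:
  assumes [measurable]: "B \<in> sets borel"
  shows "emeasure coupling {q. snd q \<in> B} = emeasure uniform01 B"
proof -
  have "emeasure coupling {q. snd q \<in> B} = (\<integral>\<^sup>+q. indicator {q. snd q \<in> B} q \<partial>coupling)"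
    by (rule nn_integral_indicator[symmetric]) measurable
  also have "\<dots> = (\<integral>\<^sup>+q. indicator B (snd q) \<partial>coupling)"
    by (intro nn_integral_cong) (simp split: split_indicator)
  also have "\<dots> = (\<Sum>m<K. \<integral>\<^sup>+u. piece_density m (R u) * indicator B (\<psi> m (R u)) \<partial>uniform01)"
    by (simp add: nn_integral_coupling)
  also have "\<dots> = (\<Sum>m<K. \<integral>\<^sup>+x. indicator (P m) x * indicator B (\<psi> m (T x)) \<partial>uniform01)"
  proof (intro sum.cong refl)
    fix m assume "m \<in> {..<K}"
    then have m: "m < K" by simp
    note [measurable] = measurable_\<psi>[OF m]
    show "(\<integral>\<^sup>+u. piece_density m (R u) * indicator B (\<psi> m (R u)) \<partial>uniform01)
        = (\<integral>\<^sup>+x. indicator (P m) x * indicator B (\<psi> m (T x)) \<partial>uniform01)"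
      by (rule nn_integral_piece_density_R[OF m, of "\<lambda>w. indicator B (\<psi> m w)"]) measurable
  qed
  also have "\<dots> = (\<Sum>m<K. \<integral>\<^sup>+x. indicator (P m) x * indicator B x \<partial>uniform01)"
    by (intro sum.cong refl nn_integral_cong) (auto simp: \<psi>_T split: split_indicator)
  also have "\<dots> = (\<Sum>m<K. \<integral>\<^sup>+x. indicator (B \<inter> P m) x \<partial>uniform01)"
    by (intro sum.cong refl nn_integral_cong) (simp split: split_indicator)
  also have "\<dots> = (\<Sum>m<K. emeasure uniform01 (B \<inter> P m))"
    by (intro sum.cong refl nn_integral_indicator) simp
  finally show ?thesis
    by (simp add: sum_emeasure_P)
qed

lemma emeasure_coupling_fst:
  assumes [measurable]: "A \<in> sets borel"
  shows "emeasure coupling {q. fst q \<in> A} = emeasure uniform01 A"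
proof -
  have "AE w in distr uniform01 borel R. (\<Sum>m<K. piece_density m w) = 1"
    unfolding distr_R by (rule AE_sum_piece_density)
  then have sum_one: "AE u in uniform01. (\<Sum>m<K. piece_density m (R u)) = 1"
    by (subst (asm) AE_distr_iff) auto
  have "emeasure coupling {q. fst q \<in> A} = (\<integral>\<^sup>+q. indicator {q. fst q \<in> A} q \<partial>coupling)"
    by (rule nn_integral_indicator[symmetric]) measurable
  also have "\<dots> = (\<integral>\<^sup>+q. indicator A (fst q) \<partial>coupling)"
    by (intro nn_integral_cong) (simp split: split_indicator)
  also have "\<dots> = (\<Sum>m<K. \<integral>\<^sup>+u. piece_density m (R u) * indicator A u \<partial>uniform01)"
    by (simp add: nn_integral_coupling)
  also have "\<dots> = (\<integral>\<^sup>+u. (\<Sum>m<K. piece_density m (R u) * indicator A u) \<partial>uniform01)"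
    by (rule nn_integral_sum[symmetric]) measurable
  also have "\<dots> = (\<integral>\<^sup>+u. (\<Sum>m<K. piece_density m (R u)) * indicator A u \<partial>uniform01)"
    by (simp only: sum_distrib_right)
  also have "\<dots> = (\<integral>\<^sup>+u. indicator A u \<partial>uniform01)"
    using sum_one by (intro nn_integral_cong_AE) (auto elim!: eventually_mono)
  finally show ?thesis
    by simp
qed

lemma AE_coupling: "AE q in coupling. T (snd q) = R (fst q)"
proof -
  have "(\<integral>\<^sup>+q. indicator {q. T (snd q) \<noteq> R (fst q)} q \<partial>coupling)
      = (\<Sum>m<K. \<integral>\<^sup>+u. piece_density m (R u) * indicator {w. T (\<psi> m w) \<noteq> w} (R u) \<partial>uniform01)"
    by (simp add: nn_integral_coupling indicator_def)
  also have "\<dots> = (\<Sum>m<K. \<integral>\<^sup>+x. indicator (P m) x * indicator {w. T (\<psi> m w) \<noteq> w} (T x) \<partial>uniform01)"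
  proof (intro sum.cong refl)
    fix m assume "m \<in> {..<K}"
    then have m: "m < K" by simp
    note [measurable] = measurable_\<psi>[OF m]
    show "(\<integral>\<^sup>+u. piece_density m (R u) * indicator {w. T (\<psi> m w) \<noteq> w} (R u) \<partial>uniform01)
        = (\<integral>\<^sup>+x. indicator (P m) x * indicator {w. T (\<psi> m w) \<noteq> w} (T x) \<partial>uniform01)"
      by (rule nn_integral_piece_density_R[OF m]) measurable
  qed
  also have "\<dots> = (\<Sum>m<K. \<integral>\<^sup>+x. 0 \<partial>uniform01)"
    by (intro sum.cong refl nn_integral_cong) (auto simp: \<psi>_T split: split_indicator)
  finally have "{q. T (snd q) \<noteq> R (fst q)} \<in> null_sets coupling"
    by (subst (asm) nn_integral_indicator) (auto simp: null_sets_def)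
  then show ?thesis
    by (auto dest!: AE_not_in elim!: eventually_mono)
qed

lemma prob_space_coupling: "prob_space coupling"
  by (rule prob_spaceI) (use emeasure_coupling_snd[of UNIV] uniform01.emeasure_space_1 in simp)

lemma distr_coupling_fst: "distr coupling borel fst = uniform01"
  by (rule measure_eqI) (simp_all add: emeasure_distr vimage_def emeasure_coupling_fst)

lemma distr_coupling_snd: "distr coupling borel snd = uniform01"
  by (rule measure_eqI) (simp_all add: emeasure_distr vimage_def emeasure_coupling_snd)

end

lemma exists_coupling:
  assumes "R \<in> borel_measurable borel" and "distr uniform01 borel R = uniform01"
  obtains C :: "(real \<times> real) measure" where "prob_space C" and "sets C = sets borel"
    and "distr C borel fst = uniform01" and "distr C borel snd = uniform01"
    and "AE q in C. T (snd q) = R (fst q)"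
  using that prob_space_coupling[OF assms] sets_coupling[OF assms] distr_coupling_fst[OF assms]
    distr_coupling_snd[OF assms] AE_coupling[OF assms] by blast

end

section \<open>Score functions\<close>

locale score_function =
  fixes g :: "real \<Rightarrow> real"
  assumes standardized: "standardized g" and pw_cont_strict_mono: "pw_cont_strict_mono g"
begin

definition g_ext :: "real \<Rightarrow> real" where
  "g_ext u = indicator {0..1} u * g u"

lemma measurable_g_ext [measurable]: "g_ext \<in> borel_measurable borel"
  using standardized
  by (simp add: standardized_def set_borel_measurable_def g_ext_def[abs_def] measurable_lborel1)

lemma g_ext_eq: "u \<in> {0..1} \<Longrightarrow> g_ext u = g u"
  by (simp add: g_ext_def)

definition law :: "real measure" where
  "law = distr uniform01 borel g_ext"

sublocale law: cdf_distribution law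
  by (simp add: cdf_distribution_def law_def)

lemma cdf_law: "cdf law = unif_dist_fn g"
proof
  fix x
  have "cdf law x = measure uniform01 {u. g_ext u \<le> x}"
    by (simp add: cdf_def law_def measure_distr vimage_def)
  also have "\<dots> = measure lborel ({u. g_ext u \<le> x} \<inter> {0<..<1})"
    by (simp add: measure_def emeasure_uniform01)
  also have "\<dots> = measure lborel ({u. g_ext u \<le> x} \<inter> {0..1})"
    using AE_lborel_ne_0_1 by (intro measure_eq_AE) (auto elim!: eventually_mono)
  also have "{u. g_ext u \<le> x} \<inter> {0..1} = {u\<in>{0..1}. g u \<le> x}"
    by (auto simp: g_ext_eq)
  finally show "cdf law x = unif_dist_fn g x"
    by (simp add: unif_dist_fn_def)
qed

lemma measurable_unif_dist_fn [measurable]: "unif_dist_fn g \<in> borel_measurable borel"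
  using law.measurable_C by (simp add: cdf_law)

lemma isCont_unif_dist_fn: "isCont (unif_dist_fn g) x"
proof -
  have "{u. g_ext u = x} \<inter> {0<..<1} \<subseteq> {u\<in>{0..1}. g u = x}"
    by (auto simp: g_ext_eq)
  then have "finite ({u. g_ext u = x} \<inter> {0<..<1})"
    by (rule finite_subset) (rule finite_level_set[OF pw_cont_strict_mono])
  then have "{u. g_ext u = x} \<inter> {0<..<1} \<in> null_sets lborel"
    by (rule finite_imp_null_set_lborel)
  moreover have "measure law {x} = measure uniform01 {u. g_ext u = x}"
    by (simp add: law_def measure_distr vimage_def)
  ultimately have "measure law {x} = 0"
    by (simp add: measure_def emeasure_uniform01 null_setsD1)
  then show ?thesis
    using law.isCont_cdf by (simp add: cdf_law)
qed

lemma integrable_law_sq: "integrable law (\<lambda>x. x\<^sup>2)"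
proof -
  have "set_integrable lborel {0..1} (\<lambda>u. (g_ext u)\<^sup>2) \<longleftrightarrow> set_integrable lborel {0..1} (\<lambda>u. (g u)\<^sup>2)"
    by (rule set_integrable_cong) (auto simp: g_ext_eq)
  then have "set_integrable lborel {0..1} (\<lambda>u. (g_ext u)\<^sup>2)"
    using standardized by (simp add: standardized_def)
  then show ?thesis
    by (simp add: law_def integrable_distr_eq integrable_uniform01_iff)
qed

lemma integral_law_id: "integral\<^sup>L law (\<lambda>x. x) = 0"
proof -
  have "(LINT u:{0..1}|lborel. g_ext u) = (LINT u:{0..1}|lborel. g u)"
    by (rule set_lebesgue_integral_cong) (auto simp: g_ext_eq)
  then show ?thesis
    using standardized by (simp add: law_def integral_distr integral_uniform01 standardized_def)
qed

lemma integral_law_sq: "integral\<^sup>L law (\<lambda>x. x\<^sup>2) = 1"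
proof -
  have "(LINT u:{0..1}|lborel. (g_ext u)\<^sup>2) = (LINT u:{0..1}|lborel. (g u)\<^sup>2)"
    by (rule set_lebesgue_integral_cong) (auto simp: g_ext_eq)
  then show ?thesis
    using standardized by (simp add: law_def integral_distr integral_uniform01 standardized_def)
qed

lemma measurable_quantile_unif_dist_fn [measurable]: "quantile (unif_dist_fn g) \<in> borel_measurable borel"
  using law.measurable_quantile by (simp add: cdf_law)

lemma mono_on_quantile_unif_dist_fn: "mono_on {0<..<1} (quantile (unif_dist_fn g))"
  using law.mono_on_quantile by (simp add: cdf_law)

lemma distr_quantile_unif_dist_fn: "distr uniform01 borel (quantile (unif_dist_fn g)) = law"
  using law.distr_quantile by (simp add: cdf_law)

lemma integrable_quantile_sq: "integrable uniform01 (\<lambda>w. (quantile (unif_dist_fn g) w)\<^sup>2)"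
  using integrable_law_sq integrable_distr_eq[of "quantile (unif_dist_fn g)" uniform01 borel "\<lambda>x. x\<^sup>2"]
  by (simp add: distr_quantile_unif_dist_fn)

lemma integral_quantile_sq: "integral\<^sup>L uniform01 (\<lambda>w. (quantile (unif_dist_fn g) w)\<^sup>2) = 1"
  using integral_law_sq integral_distr[of "quantile (unif_dist_fn g)" uniform01 borel "\<lambda>x. x\<^sup>2"]
  by (simp add: distr_quantile_unif_dist_fn)

definition transport :: "real \<Rightarrow> real" where
  "transport u = unif_dist_fn g (g_ext u)"

lemma transport_eq: "u \<in> {0..1} \<Longrightarrow> transport u = unif_dist_fn g (g u)"
  by (simp add: transport_def g_ext_eq)

lemma measurable_transport [measurable]: "transport \<in> borel_measurable borel"
  unfolding transport_def[abs_def] by measurable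

lemma distr_transport: "distr uniform01 borel transport = uniform01"
proof -
  have "distr uniform01 borel transport = distr (distr uniform01 borel g_ext) borel (unif_dist_fn g)"
    by (subst distr_distr) (auto simp: transport_def[abs_def] comp_def)
  also have "\<dots> = distr law borel (cdf law)"
    by (simp add: law_def[symmetric] cdf_law)
  also have "\<dots> = uniform01"
    by (rule law.distr_cdf_eq_uniform01) (simp add: cdf_law isCont_unif_dist_fn)
  finally show ?thesis .
qed

lemma distr_score_rv:
  assumes "prob_space M" and X: "continuous_rv M X"
  shows "distr M borel (\<lambda>\<omega>. g (dist_fn M X (X \<omega>))) = law"
proof -
  interpret prob_space M by fact
  have [measurable]: "X \<in> borel_measurable M"
    using X by (simp add: continuous_rv_def)
  have "distr M borel (\<lambda>\<omega>. g (dist_fn M X (X \<omega>))) = distr M borel (\<lambda>\<omega>. g_ext (dist_fn M X (X \<omega>)))"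
    using dist_fn_bounds by (intro distr_cong) (auto simp: g_ext_eq)
  also have "\<dots> = distr (distr M borel (\<lambda>\<omega>. dist_fn M X (X \<omega>))) borel g_ext"
    by (subst distr_distr) (auto simp: comp_def)
  also have "\<dots> = law"
    by (simp add: distr_dist_fn_eq_uniform01[OF prob_space_axioms X] law_def)
  finally show ?thesis .
qed

lemma measurable_score_rv:
  assumes "prob_space M" and X: "continuous_rv M X"
  shows "(\<lambda>\<omega>. g (dist_fn M X (X \<omega>))) \<in> borel_measurable M"
proof -
  interpret prob_space M by fact
  have [measurable]: "X \<in> borel_measurable M"
    using X by (simp add: continuous_rv_def)
  have "(\<lambda>\<omega>. g (dist_fn M X (X \<omega>))) = (\<lambda>\<omega>. g_ext (dist_fn M X (X \<omega>)))"
    using dist_fn_bounds[of X] by (simp add: g_ext_eq)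
  then show ?thesis
    by simp
qed

context
  fixes M :: "'a measure" and A :: "'a \<Rightarrow> real"
  assumes M: "prob_space M" and A [measurable]: "A \<in> borel_measurable M"
    and distr_A: "distr M borel A = law"
begin

lemma distr_unif_dist_fn_rv: "distr M borel (\<lambda>\<omega>. unif_dist_fn g (A \<omega>)) = uniform01"
proof -
  have "distr M borel (\<lambda>\<omega>. unif_dist_fn g (A \<omega>)) = distr (distr M borel A) borel (unif_dist_fn g)"
    by (subst distr_distr) (auto simp: comp_def)
  also have "\<dots> = distr law borel (cdf law)"
    by (simp add: distr_A cdf_law)
  also have "\<dots> = uniform01"
    by (rule law.distr_cdf_eq_uniform01) (simp add: cdf_law isCont_unif_dist_fn)
  finally show ?thesis .
qed

lemma AE_quantile_unif_dist_fn_rv: "AE \<omega> in M. quantile (unif_dist_fn g) (unif_dist_fn g (A \<omega>)) = A \<omega>"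
proof -
  have "dist_fn M A = unif_dist_fn g"
    by (simp add: dist_fn_def distr_A cdf_law)
  moreover have "continuous_rv M A"
    by (simp add: continuous_rv_def \<open>dist_fn M A = unif_dist_fn g\<close> isCont_unif_dist_fn)
  ultimately show ?thesis
    using AE_quantile_dist_fn_eq[OF M, of A] by simp
qed

lemma integral_rv: "integral\<^sup>L M A = 0"
proof -
  have "integral\<^sup>L M A = integral\<^sup>L (distr M borel A) (\<lambda>x. x)"
    by (simp add: integral_distr)
  then show ?thesis
    by (simp only: distr_A integral_law_id)
qed

lemma integral_rv_sq: "integral\<^sup>L M (\<lambda>\<omega>. (A \<omega>)\<^sup>2) = 1"
proof -
  have "integral\<^sup>L M (\<lambda>\<omega>. (A \<omega>)\<^sup>2) = integral\<^sup>L (distr M borel A) (\<lambda>x. x\<^sup>2)"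
    by (simp add: integral_distr)
  then show ?thesis
    by (simp only: distr_A integral_law_sq)
qed

end

lemma unif_dist_fn_less:
  assumes "a < b" and between: "\<And>u. u \<in> {a<..<b} \<Longrightarrow> u \<in> {0..1} \<and> y1 < g u \<and> g u \<le> y2"
  shows "unif_dist_fn g y1 < unif_dist_fn g y2"
proof -
  define S where "S y = {u. g_ext u \<le> y} \<inter> {0..1}" for y
  have S_eq: "S y = {u\<in>{0..1}. g u \<le> y}" for y
    by (auto simp: S_def g_ext_eq)
  have [measurable]: "S y \<in> sets borel" for y
    unfolding S_def by measurable
  have unit: "{0..1::real} \<in> fmeasurable lborel"
    by (simp add: fmeasurable_def)
  have fin: "S y \<in> fmeasurable lborel" for y
    by (rule fmeasurableI2[OF unit]) (auto simp: S_def)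
  obtain u where "u \<in> {a<..<b}"
    using \<open>a < b\<close> dense by (metis greaterThanLessThan_iff)
  then have "S y1 \<subseteq> S y2"
    using between[of u] by (auto simp: S_def)
  moreover have "{a<..<b} \<subseteq> S y2 - S y1"
    using between by (force simp: S_eq)
  then have "measure lborel {a<..<b} \<le> measure lborel (S y2 - S y1)"
    by (rule measure_mono_fmeasurable) (auto intro: fmeasurableI2[OF fin[of y2]])
  then have "b - a \<le> measure lborel (S y2 - S y1)"
    using \<open>a < b\<close> by simp
  moreover have "measure lborel (S y2 - S y1) = measure lborel (S y2) - measure lborel (S y1)"
    using fin[of y2] \<open>S y1 \<subseteq> S y2\<close> by (intro measure_Diff) (auto simp: fmeasurable_def)
  ultimately have "b - a \<le> measure lborel (S y2) - measure lborel (S y1)"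
    by simp
  then show ?thesis
    using \<open>a < b\<close> by (simp add: unif_dist_fn_def S_eq)
qed

lemma strict_mono_on_transport:
  assumes "{a<..<b} \<subseteq> {0..1}" and "strict_mono_on {a<..<b} g"
  shows "strict_mono_on {a<..<b} transport"
proof (rule monotone_onI)
  fix x y assume xy: "x \<in> {a<..<b}" "y \<in> {a<..<b}" "x < y"
  have "unif_dist_fn g (g x) < unif_dist_fn g (g y)"
  proof (rule unif_dist_fn_less[OF \<open>x < y\<close>])
    fix u assume "u \<in> {x<..<y}"
    then have u: "u \<in> {a<..<b}" "x < u" "u < y"
      using xy by auto
    show "u \<in> {0..1} \<and> g x < g u \<and> g u \<le> g y"
      using u assms strict_mono_onD[OF assms(2) xy(1) u(1)] strict_mono_onD[OF assms(2) u(1) xy(2)] by auto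
  qed
  moreover have "x \<in> {0..1}" "y \<in> {0..1}"
    using xy(1,2) assms(1) by blast+
  ultimately show "transport x < transport y"
    by (simp add: transport_def g_ext_eq)
qed

lemma strict_antimono_on_transport:
  assumes "{a<..<b} \<subseteq> {0..1}" and "strict_antimono_on {a<..<b} g"
  shows "strict_antimono_on {a<..<b} transport"
proof (rule monotone_onI)
  fix x y assume xy: "x \<in> {a<..<b}" "y \<in> {a<..<b}" "x < y"
  have "unif_dist_fn g (g y) < unif_dist_fn g (g x)"
  proof (rule unif_dist_fn_less[OF \<open>x < y\<close>])
    fix u assume "u \<in> {x<..<y}"
    then have u: "u \<in> {a<..<b}" "x < u" "u < y"
      using xy by auto
    show "u \<in> {0..1} \<and> g y < g u \<and> g u \<le> g x"
      using u assms monotone_onD[OF assms(2) xy(1) u(1)] monotone_onD[OF assms(2) u(1) xy(2)] by auto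
  qed
  moreover have "x \<in> {0..1}" "y \<in> {0..1}"
    using xy(1,2) assms(1) by blast+
  ultimately show "transport y < transport x"
    by (simp add: transport_def g_ext_eq)
qed

lemma piecewise_invertible_transport:
  obtains K P \<psi> where "piecewise_invertible_mpt transport K P \<psi>"
proof -
  obtain K v where "unit_partition K v" and pieces: "\<And>m. m < K \<Longrightarrow>
      strict_mono_on {v m<..<v (Suc m)} g \<or> strict_antimono_on {v m<..<v (Suc m)} g"
    using pw_cont_strict_mono_partition[OF pw_cont_strict_mono] by blast
  then interpret unit_partition K v
    by simp
  have "\<exists>\<psi>. \<psi> \<in> borel_measurable borel \<and> (\<forall>x\<in>{v m<..<v (Suc m)}. \<psi> (transport x) = x)"
    if "m \<in> {..<K}" for m
  proof -
    have m: "m < K"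
      using that by simp
    have "strict_mono_on {v m<..<v (Suc m)} transport \<or> strict_antimono_on {v m<..<v (Suc m)} transport"
      using pieces[OF m] strict_mono_on_transport[OF piece_subset_unit[OF m]]
        strict_antimono_on_transport[OF piece_subset_unit[OF m]] by blast
    from strict_mono_or_antimono_on_imp_measurable_left_inverse[OF this] show ?thesis
      by (simp add: Bex_def)
  qed
  then have "\<forall>m\<in>{..<K}. \<exists>\<psi>. \<psi> \<in> borel_measurable borel \<and> (\<forall>x\<in>{v m<..<v (Suc m)}. \<psi> (transport x) = x)"
    by blast
  from bchoice[OF this] obtain \<psi> where \<psi>:
    "\<forall>m\<in>{..<K}. \<psi> m \<in> borel_measurable borel \<and> (\<forall>x\<in>{v m<..<v (Suc m)}. \<psi> m (transport x) = x)"
    by blast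
  have "piecewise_invertible_mpt transport K (\<lambda>m. {v m<..<v (Suc m)}) \<psi>"
  proof
    show "disjoint_family_on (\<lambda>m. {v m<..<v (Suc m)}) {..<K}"
      by (rule disjoint_family_on_pieces)
    show "{0<..<1} - (\<Union>m<K. {v m<..<v (Suc m)}) \<in> null_sets lborel"
      by (rule null_sets_outside_pieces)
  qed (use \<psi> distr_transport in auto)
  then show thesis
    by (rule that)
qed

lemma exists_coupling_transport:
  assumes "R \<in> borel_measurable borel" and "distr uniform01 borel R = uniform01"
  obtains C :: "(real \<times> real) measure" where "prob_space C" and "sets C = sets borel"
    and "distr C borel fst = uniform01" and "distr C borel snd = uniform01"
    and "AE q in C. transport (snd q) = R (fst q)"
  using piecewise_invertible_transport piecewise_invertible_mpt.exists_coupling[OF _ assms] by metis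

end

section \<open>Bounds of the generalized Spearman correlation\<close>

lemma pearson_standardized:
  assumes "integral\<^sup>L M A = 0" "integral\<^sup>L M B = 0"
    and "integral\<^sup>L M (\<lambda>\<omega>. (A \<omega>)\<^sup>2) = 1" "integral\<^sup>L M (\<lambda>\<omega>. (B \<omega>)\<^sup>2) = 1"
  shows "pearson M A B = (\<integral>\<omega>. A \<omega> * B \<omega> \<partial>M)"
  using assms by (simp add: pearson_def Let_def)

locale score_pair = G: score_function g + H: score_function h for g h
begin

context
  fixes M :: "'a measure" and X Y :: "'a \<Rightarrow> real"
  assumes M: "prob_space M" and X: "continuous_rv M X" and Y: "continuous_rv M Y"
begin

lemma measurable_transformed_ranks [measurable]:
  "(\<lambda>\<omega>. unif_dist_fn g (g (dist_fn M X (X \<omega>)))) \<in> borel_measurable M"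
  "(\<lambda>\<omega>. unif_dist_fn h (h (dist_fn M Y (Y \<omega>)))) \<in> borel_measurable M"
  using G.measurable_score_rv[OF M X] H.measurable_score_rv[OF M Y] by measurable

lemma distr_transformed_ranks:
  "distr M borel (\<lambda>\<omega>. unif_dist_fn g (g (dist_fn M X (X \<omega>)))) = uniform01"
  "distr M borel (\<lambda>\<omega>. unif_dist_fn h (h (dist_fn M Y (Y \<omega>)))) = uniform01"
  using G.distr_unif_dist_fn_rv[OF M G.measurable_score_rv[OF M X] G.distr_score_rv[OF M X]]
    H.distr_unif_dist_fn_rv[OF M H.measurable_score_rv[OF M Y] H.distr_score_rv[OF M Y]]
  by simp_all

lemma gen_spearman_eq_integral_quantiles:
  "gen_spearman g h M X Y = (\<integral>\<omega>. quantile (unif_dist_fn g) (unif_dist_fn g (g (dist_fn M X (X \<omega>))))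
     * quantile (unif_dist_fn h) (unif_dist_fn h (h (dist_fn M Y (Y \<omega>)))) \<partial>M)"
proof -
  note A = G.measurable_score_rv[OF M X] G.distr_score_rv[OF M X]
    and B = H.measurable_score_rv[OF M Y] H.distr_score_rv[OF M Y]
  have "gen_spearman g h M X Y = (\<integral>\<omega>. g (dist_fn M X (X \<omega>)) * h (dist_fn M Y (Y \<omega>)) \<partial>M)"
    unfolding gen_spearman_def
    by (rule pearson_standardized) (simp_all add: G.integral_rv[OF M A] H.integral_rv[OF M B]
        G.integral_rv_sq[OF M A] H.integral_rv_sq[OF M B])
  also have "\<dots> = (\<integral>\<omega>. quantile (unif_dist_fn g) (unif_dist_fn g (g (dist_fn M X (X \<omega>))))
     * quantile (unif_dist_fn h) (unif_dist_fn h (h (dist_fn M Y (Y \<omega>)))) \<partial>M)"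
  proof (rule integral_cong_AE)
    show "AE \<omega> in M. g (dist_fn M X (X \<omega>)) * h (dist_fn M Y (Y \<omega>))
        = quantile (unif_dist_fn g) (unif_dist_fn g (g (dist_fn M X (X \<omega>))))
          * quantile (unif_dist_fn h) (unif_dist_fn h (h (dist_fn M Y (Y \<omega>))))"
      using G.AE_quantile_unif_dist_fn_rv[OF M A] H.AE_quantile_unif_dist_fn_rv[OF M B]
      by eventually_elim simp
  qed (use A B in measurable)
  finally show ?thesis .
qed

lemma gen_spearman_le:
  "gen_spearman g h M X Y \<le> (\<integral>w. quantile (unif_dist_fn g) w * quantile (unif_dist_fn h) w \<partial>uniform01)"
  unfolding gen_spearman_eq_integral_quantiles
  by (rule rearrangement_inequality[OF M _ distr_transformed_ranks(1) _ distr_transformed_ranks(2)])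
    (simp_all add: G.mono_on_quantile_unif_dist_fn H.mono_on_quantile_unif_dist_fn
      G.integrable_quantile_sq H.integrable_quantile_sq)

lemma gen_spearman_ge:
  "(\<integral>w. quantile (unif_dist_fn g) w * quantile (unif_dist_fn h) (1 - w) \<partial>uniform01) \<le> gen_spearman g h M X Y"
proof -
  let ?Qg = "quantile (unif_dist_fn g)" and ?Qh = "quantile (unif_dist_fn h)"
  define b where "b w = - ?Qh (1 - w)" for w
  have [measurable]: "b \<in> borel_measurable borel"
    unfolding b_def[abs_def] by measurable
  have "mono_on {0<..<1} b"
    using H.mono_on_quantile_unif_dist_fn by (auto simp: b_def mono_on_def)
  moreover have "integrable uniform01 (\<lambda>w. (b w)\<^sup>2)"
    using H.integrable_quantile_sq integrable_distr_eq[of "\<lambda>x. 1 - x" uniform01 borel "\<lambda>w. (?Qh w)\<^sup>2"]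
    by (simp add: b_def distr_reflect_uniform01)
  ultimately have "(\<integral>\<omega>. ?Qg (unif_dist_fn g (g (dist_fn M X (X \<omega>))))
      * b (1 - unif_dist_fn h (h (dist_fn M Y (Y \<omega>)))) \<partial>M) \<le> (\<integral>w. ?Qg w * b w \<partial>uniform01)"
    by (intro rearrangement_inequality[OF M _ distr_transformed_ranks(1) _
          distr_one_minus_uniform01_rv[OF _ distr_transformed_ranks(2)]])
      (simp_all add: G.mono_on_quantile_unif_dist_fn G.integrable_quantile_sq)
  then show ?thesis
    by (simp add: b_def gen_spearman_eq_integral_quantiles)
qed

lemma gen_spearman_eq_upper:
  assumes "AE \<omega> in M. unif_dist_fn g (g (dist_fn M X (X \<omega>))) = unif_dist_fn h (h (dist_fn M Y (Y \<omega>)))"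
  shows "gen_spearman g h M X Y = (\<integral>w. quantile (unif_dist_fn g) w * quantile (unif_dist_fn h) w \<partial>uniform01)"
proof -
  let ?W = "\<lambda>\<omega>. unif_dist_fn g (g (dist_fn M X (X \<omega>)))"
  have "gen_spearman g h M X Y = (\<integral>\<omega>. quantile (unif_dist_fn g) (?W \<omega>) * quantile (unif_dist_fn h) (?W \<omega>) \<partial>M)"
    unfolding gen_spearman_eq_integral_quantiles
    by (intro integral_cong_AE) (use assms in \<open>auto elim!: eventually_mono\<close>)
  also have "\<dots> = (\<integral>w. quantile (unif_dist_fn g) w * quantile (unif_dist_fn h) w \<partial>distr M borel ?W)"
    by (simp add: integral_distr)
  finally show ?thesis
    by (simp add: distr_transformed_ranks)
qed

lemma gen_spearman_eq_lower:
  assumes "AE \<omega> in M. unif_dist_fn g (g (dist_fn M X (X \<omega>))) = 1 - unif_dist_fn h (h (dist_fn M Y (Y \<omega>)))"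
  shows "gen_spearman g h M X Y = (\<integral>w. quantile (unif_dist_fn g) w * quantile (unif_dist_fn h) (1 - w) \<partial>uniform01)"
proof -
  let ?W = "\<lambda>\<omega>. unif_dist_fn g (g (dist_fn M X (X \<omega>)))"
  have "gen_spearman g h M X Y = (\<integral>\<omega>. quantile (unif_dist_fn g) (?W \<omega>) * quantile (unif_dist_fn h) (1 - ?W \<omega>) \<partial>M)"
    unfolding gen_spearman_eq_integral_quantiles
    by (intro integral_cong_AE) (use assms in \<open>auto elim!: eventually_mono\<close>)
  also have "\<dots> = (\<integral>w. quantile (unif_dist_fn g) w * quantile (unif_dist_fn h) (1 - w) \<partial>distr M borel ?W)"
    by (simp add: integral_distr)
  finally show ?thesis
    by (simp add: distr_transformed_ranks)
qed

end

lemma exists_coupling_of_ranks: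
  assumes [measurable]: "R \<in> borel_measurable borel" and distr_R: "distr uniform01 borel R = uniform01"
  obtains C :: "(real \<times> real) measure" where "prob_space C" and "sets C = sets borel"
    and "continuous_rv C fst" and "continuous_rv C snd"
    and "AE q in C. unif_dist_fn h (h (dist_fn C snd (snd q))) = R (dist_fn C fst (fst q))"
proof -
  obtain C :: "(real \<times> real) measure" where C: "prob_space C" "sets C = sets borel"
    "distr C borel fst = uniform01" "distr C borel snd = uniform01"
    and AE_C: "AE q in C. H.transport (snd q) = R (fst q)"
    using H.exists_coupling_transport[OF assms] by blast
  have measurable_C: "measurable C (borel :: real measure) = measurable borel borel"
    by (rule measurable_cong_sets[OF C(2) refl])
  have fst [measurable]: "fst \<in> borel_measurable C"
    using measurable_C measurable_fst_borel by simp
  have snd [measurable]: "snd \<in> borel_measurable C"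
    using measurable_C measurable_snd_borel by simp
  have "AE q in C. unif_dist_fn h (h (dist_fn C snd (snd q))) = R (dist_fn C fst (fst q))"
    using AE_C AE_uniform01_rv[OF fst C(3)] AE_uniform01_rv[OF snd C(4)]
    by eventually_elim (simp add: dist_fn_uniform01_rv C(3,4) H.transport_eq)
  with C continuous_rv_uniform01_rv[OF fst C(3)] continuous_rv_uniform01_rv[OF snd C(4)] show thesis
    using that by blast
qed

lemma exists_gen_spearman_eq_upper:
  "\<exists>C :: (real \<times> real) measure. prob_space C \<and> sets C = sets borel \<and>
    continuous_rv C fst \<and> continuous_rv C snd \<and>
    (AE q in C. unif_dist_fn g (g (dist_fn C fst (fst q))) = unif_dist_fn h (h (dist_fn C snd (snd q)))) \<and>
    gen_spearman g h C fst snd = (\<integral>w. quantile (unif_dist_fn g) w * quantile (unif_dist_fn h) w \<partial>uniform01)"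
proof -
  obtain C :: "(real \<times> real) measure" where C: "prob_space C" "sets C = sets borel"
    "continuous_rv C fst" "continuous_rv C snd"
    and AE_C: "AE q in C. unif_dist_fn h (h (dist_fn C snd (snd q))) = G.transport (dist_fn C fst (fst q))"
    using exists_coupling_of_ranks[OF G.measurable_transport G.distr_transport] by blast
  have bounds: "dist_fn C fst x \<in> {0..1}" for x
    using C(3) by (intro prob_space.dist_fn_bounds[OF C(1)]) (simp add: continuous_rv_def)
  have "AE q in C. unif_dist_fn g (g (dist_fn C fst (fst q))) = unif_dist_fn h (h (dist_fn C snd (snd q)))"
    using AE_C by eventually_elim (simp add: G.transport_eq[OF bounds])
  with C gen_spearman_eq_upper[OF C(1,3,4)] show ?thesis
    by blast
qed

lemma exists_gen_spearman_eq_lower: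
  "\<exists>C :: (real \<times> real) measure. prob_space C \<and> sets C = sets borel \<and>
    continuous_rv C fst \<and> continuous_rv C snd \<and>
    (AE q in C. unif_dist_fn g (g (dist_fn C fst (fst q))) = 1 - unif_dist_fn h (h (dist_fn C snd (snd q)))) \<and>
    gen_spearman g h C fst snd = (\<integral>w. quantile (unif_dist_fn g) w * quantile (unif_dist_fn h) (1 - w) \<partial>uniform01)"
proof -
  have "distr uniform01 borel (\<lambda>u. 1 - G.transport u) = uniform01"
    by (rule distr_one_minus_uniform01_rv) (simp_all add: G.distr_transport)
  then obtain C :: "(real \<times> real) measure" where C: "prob_space C" "sets C = sets borel"
    "continuous_rv C fst" "continuous_rv C snd"
    and AE_C: "AE q in C. unif_dist_fn h (h (dist_fn C snd (snd q))) = 1 - G.transport (dist_fn C fst (fst q))"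
    using exists_coupling_of_ranks[of "\<lambda>u. 1 - G.transport u"] by auto
  have bounds: "dist_fn C fst x \<in> {0..1}" for x
    using C(3) by (intro prob_space.dist_fn_bounds[OF C(1)]) (simp add: continuous_rv_def)
  have "AE q in C. unif_dist_fn g (g (dist_fn C fst (fst q))) = 1 - unif_dist_fn h (h (dist_fn C snd (snd q)))"
    using AE_C by eventually_elim (simp add: G.transport_eq[OF bounds])
  with C gen_spearman_eq_lower[OF C(1,3,4)] show ?thesis
    by blast
qed

lemma set_integral_gen_inv_eq:
  "(LINT u:{0..1}|lborel. gen_inv (unif_dist_fn g) u * gen_inv (unif_dist_fn h) u)
    = (\<integral>w. quantile (unif_dist_fn g) w * quantile (unif_dist_fn h) w \<partial>uniform01)"
  by (rule set_integral_unit_eq_integral_uniform01) (measurable, simp add: quantile_def)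

lemma set_integral_gen_inv_reflected_eq:
  "(LINT u:{0..1}|lborel. gen_inv (unif_dist_fn g) u * gen_inv (unif_dist_fn h) (1 - u))
    = (\<integral>w. quantile (unif_dist_fn g) w * quantile (unif_dist_fn h) (1 - w) \<partial>uniform01)"
  by (rule set_integral_unit_eq_integral_uniform01) (measurable, simp add: quantile_def)

lemma integral_quantiles_eq_1:
  assumes "unif_dist_fn g = unif_dist_fn h"
  shows "(\<integral>w. quantile (unif_dist_fn g) w * quantile (unif_dist_fn h) w \<partial>uniform01) = 1"
  using G.integral_quantile_sq by (simp add: assms power2_eq_square)

lemma integral_quantiles_reflected_eq_minus_1:
  assumes "\<forall>u\<in>{0<..<1}. gen_inv (unif_dist_fn h) (1 - u) = - gen_inv (unif_dist_fn g) u"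
  shows "(\<integral>w. quantile (unif_dist_fn g) w * quantile (unif_dist_fn h) (1 - w) \<partial>uniform01) = -1"
proof -
  have "(\<integral>w. quantile (unif_dist_fn g) w * quantile (unif_dist_fn h) (1 - w) \<partial>uniform01)
      = (\<integral>w. - (quantile (unif_dist_fn g) w)\<^sup>2 \<partial>uniform01)"
  proof (rule integral_cong_AE)
    show "AE w in uniform01. quantile (unif_dist_fn g) w * quantile (unif_dist_fn h) (1 - w)
        = - (quantile (unif_dist_fn g) w)\<^sup>2"
      using AE_uniform01 by eventually_elim (use assms in \<open>simp add: quantile_def power2_eq_square\<close>)
  qed simp_all
  then show ?thesis
    by (simp add: G.integral_quantile_sq)
qed

end

theorem theorem1:
  fixes g h :: "real \<Rightarrow> real"
  assumes "standardized g" and "standardized h"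
    and "pw_cont_strict_mono g" and "pw_cont_strict_mono h"
  defines "Fg \<equiv> unif_dist_fn g" and "Fh \<equiv> unif_dist_fn h"
  defines "Tg \<equiv> Fg \<circ> g" and "Th \<equiv> Fh \<circ> h"
  defines "rho_max \<equiv> LINT u:{0..1}|lborel. gen_inv Fg u * gen_inv Fh u"
    and "rho_min \<equiv> LINT u:{0..1}|lborel. gen_inv Fg u * gen_inv Fh (1 - u)"
  shows
    \<comment> \<open>(a) upper bound, attained when T_g(U) = T_h(V) a.s.\<close>
    "(\<forall>(M::'a measure) X Y. prob_space M \<and> continuous_rv M X \<and> continuous_rv M Y \<longrightarrow>
        gen_spearman g h M X Y \<le> rho_max)
     \<and> (\<forall>(M::'a measure) X Y. prob_space M \<and> continuous_rv M X \<and> continuous_rv M Y \<and>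
        (AE w in M. Tg (dist_fn M X (X w)) = Th (dist_fn M Y (Y w))) \<longrightarrow>
        gen_spearman g h M X Y = rho_max)
     \<and> (\<exists>M::(real \<times> real) measure. prob_space M \<and> sets M = sets borel \<and>
        continuous_rv M fst \<and> continuous_rv M snd \<and>
        (AE w in M. Tg (dist_fn M fst (fst w)) = Th (dist_fn M snd (snd w))) \<and>
        gen_spearman g h M fst snd = rho_max)
     \<comment> \<open>(b) lower bound, attained when T_g(U) = 1 - T_h(V) a.s.\<close>
     \<and> (\<forall>(M::'a measure) X Y. prob_space M \<and> continuous_rv M X \<and> continuous_rv M Y \<longrightarrow>
        rho_min \<le> gen_spearman g h M X Y)
     \<and> (\<forall>(M::'a measure) X Y. prob_space M \<and> continuous_rv M X \<and> continuous_rv M Y \<and>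
        (AE w in M. Tg (dist_fn M X (X w)) = 1 - Th (dist_fn M Y (Y w))) \<longrightarrow>
        gen_spearman g h M X Y = rho_min)
     \<and> (\<exists>M::(real \<times> real) measure. prob_space M \<and> sets M = sets borel \<and>
        continuous_rv M fst \<and> continuous_rv M snd \<and>
        (AE w in M. Tg (dist_fn M fst (fst w)) = 1 - Th (dist_fn M snd (snd w))) \<and>
        gen_spearman g h M fst snd = rho_min)
     \<comment> \<open>(c)\<close>
     \<and> (Fg = Fh \<longrightarrow> rho_max = 1)
     \<and> ((\<forall>u\<in>{0<..<1}. gen_inv Fh (1 - u) = - gen_inv Fg u) \<longrightarrow> rho_min = -1)"
proof -
  interpret score_pair g h
    using assms(1-4) by (simp add: score_pair_def score_function_def)
  have rho_max: "rho_max = (\<integral>w. quantile Fg w * quantile Fh w \<partial>uniform01)"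
    unfolding rho_max_def Fg_def Fh_def by (rule set_integral_gen_inv_eq)
  have rho_min: "rho_min = (\<integral>w. quantile Fg w * quantile Fh (1 - w) \<partial>uniform01)"
    unfolding rho_min_def Fg_def Fh_def by (rule set_integral_gen_inv_reflected_eq)
  show ?thesis
    unfolding rho_max rho_min Tg_def Th_def Fg_def Fh_def comp_def
    by (intro conjI allI impI exists_gen_spearman_eq_upper exists_gen_spearman_eq_lower
        integral_quantiles_eq_1 integral_quantiles_reflected_eq_minus_1)
      (auto intro: gen_spearman_le gen_spearman_eq_upper gen_spearman_ge gen_spearman_eq_lower)
qed

end
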